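(* Assume (A1)–(A4) and $(RC_+)$. Then the Markovian strategy $\pi_t^+:=\mathbf{1}_{R^+}(X_{t-1})$, $t\ge1$, generates an asymptotic exponential arbitrage with geometrically decaying probability of failure: there are constants $b>0$ and $c>0$ such that $\mathbb{P}(V_t^{\pi^+}\ge e^{bt})\ge 1-e^{-ct}$ for all sufficiently large $t$.
   Context: Setting: $\mu,\sigma:\mathbb{R}\to\mathbb{R}$ are measurable, $(\varepsilon_t)_{t\ge1}$ are i.i.d. real random variables on $(\Omega,\mathcal{F},\mathbb{P})$, $X_0\in\mathbb{R}$ is a constant, and $X_t=X_{t-1}+\mu(X_{t-1})+\sigma(X_{t-1})\varepsilon_t$ for $t\ge1$. The (discounted) stock price is $S_t=e^{X_t}$ and $\mathcal{F}_t=\sigma(X_s,0\le s\le t)$. Assumptions: (A1) $\varepsilon_1$ has a density $\gamma$ w.r.t. Lebesgue measure $\lambda$ which is bounded and bounded away from $0$ on each compact subset of $\mathbb{R}$; (A2) $\mu$ is locally bounded, $\sigma$ is positive, bounded away from $0$ on each compact set and globally bounded; (A3) $\limsup_{|x|\to\infty}|x+\mu(x)|/|x|<1$; (A4) there is $\kappa>0$ with $\mathbb{E}e^{\kappa\varepsilon_1^2}<\infty$, and $\mathbb{E}\varepsilon_1=0$. Condition $(RC_+)$: the set $R^+:=\{x\in\mathbb{R}:\mu(x)>0\}$ has $\lambda(R^+)>0$. A trading strategy is an $(\mathcal{F}_t)$-predictable $[0,1]$-valued process $(\pi_t)_{t\ge1}$ ($\pi_t$ is $\mathcal{F}_{t-1}$-measurable);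 its wealth process is $V_0^\pi=V_0>0$ and $V_t^\pi=V_{t-1}^\pi\big((1-\pi_t)+\pi_t S_t/S_{t-1}\big)$, $t\ge1$. *)

theory Defs
  imports "HOL-Probability.Probability"
begin

fun Xproc :: "(real \<Rightarrow> real) \<Rightarrow> (real \<Rightarrow> real) \<Rightarrow> (nat \<Rightarrow> 'a \<Rightarrow> real) \<Rightarrow> real \<Rightarrow> nat \<Rightarrow> 'a \<Rightarrow> real" where
  "Xproc \<mu> \<sigma> \<epsilon> x0 0 \<omega> = x0"
| "Xproc \<mu> \<sigma> \<epsilon> x0 (Suc t) \<omega> =
     Xproc \<mu> \<sigma> \<epsilon> x0 t \<omega> + \<mu> (Xproc \<mu> \<sigma> \<epsilon> x0 t \<omega>)
     + \<sigma> (Xproc \<mu> \<sigma> \<epsilon> x0 t \<omega>) * \<epsilon> (Suc t) \<omega>"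

definition Sproc :: "(real \<Rightarrow> real) \<Rightarrow> (real \<Rightarrow> real) \<Rightarrow> (nat \<Rightarrow> 'a \<Rightarrow> real) \<Rightarrow> real \<Rightarrow> nat \<Rightarrow> 'a \<Rightarrow> real" where
  "Sproc \<mu> \<sigma> \<epsilon> x0 t \<omega> = exp (Xproc \<mu> \<sigma> \<epsilon> x0 t \<omega>)"

text \<open>Wealth process of a strategy pi (pi t is the position on period t, t >= 1):
  V_0 = v0, V_t = V_{t-1} ((1 - pi_t) + pi_t S_t / S_{t-1}).\<close>
fun wealth :: "(real \<Rightarrow> real) \<Rightarrow> (real \<Rightarrow> real) \<Rightarrow> (nat \<Rightarrow> 'a \<Rightarrow> real) \<Rightarrow> real
     \<Rightarrow> (nat \<Rightarrow> 'a \<Rightarrow> real) \<Rightarrow> real \<Rightarrow> nat \<Rightarrow> 'a \<Rightarrow> real" where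
  "wealth \<mu> \<sigma> \<epsilon> x0 \<pi> v0 0 \<omega> = v0"
| "wealth \<mu> \<sigma> \<epsilon> x0 \<pi> v0 (Suc t) \<omega> =
     wealth \<mu> \<sigma> \<epsilon> x0 \<pi> v0 t \<omega> *
       ((1 - \<pi> (Suc t) \<omega>) + \<pi> (Suc t) \<omega> * Sproc \<mu> \<sigma> \<epsilon> x0 (Suc t) \<omega> / Sproc \<mu> \<sigma> \<epsilon> x0 t \<omega>)"

definition pi_plus :: "(real \<Rightarrow> real) \<Rightarrow> (real \<Rightarrow> real) \<Rightarrow> (nat \<Rightarrow> 'a \<Rightarrow> real) \<Rightarrow> real \<Rightarrow> nat \<Rightarrow> 'a \<Rightarrow> real" where
  "pi_plus \<mu> \<sigma> \<epsilon> x0 t \<omega> = indicator {x. \<mu> x > 0} (Xproc \<mu> \<sigma> \<epsilon> x0 (t - 1) \<omega>)"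

end

theory Submission
  imports Defs
begin

text \<open>
  The wealth of \<pi>+ is V_t = v0 exp(L_t), where L_t sums the one-step log-gains
  1_{\<mu>(X) > 0} (\<mu>(X) + \<sigma>(X) \<epsilon>). By a Chernoff bound it suffices to find s, z > 0 with
  E[V_t^(-s)] \<le> C exp(-z t). This follows by iterating, with the independence of the shocks,
  a geometric drift condition for the chain discounted by the s-th power of the wealth:
    E[exp(-s g(x, \<epsilon>)) h(x + \<mu> x + \<sigma> x \<epsilon>)] \<le> exp(-z) h(x)  for every state x,
  where h(y) = exp(\<theta>|y|), lowered by a factor \<beta> < 1 on a bounded set G on which \<mu> \<ge> \<eta> > 0
  (such a G exists by (RC+)). Far from the origin the contraction (A3) makes exp(\<theta>|y|)
  decrease; on G the positive drift earned by \<pi>+ pays for the factor \<beta>; in the remaining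
  bounded region the probability of entering G, bounded below by (A1), outweighs the growth
  of exp(\<theta>|y|), provided \<theta> is small compared with s.
\<close>

lemma exp_le_second_order: "exp (z::real) \<le> 1 + z + z\<^sup>2 * exp \<bar>z\<bar>"
proof -
  obtain t where t: "\<bar>t\<bar> \<le> \<bar>z\<bar>" "exp z = (\<Sum>m<2. z ^ m / fact m) + exp t / fact 2 * z ^ 2"
    using Maclaurin_exp_le[of z 2] by blast
  have "exp t * z\<^sup>2 \<le> exp \<bar>z\<bar> * z\<^sup>2"
    using t(1) by (intro mult_right_mono) auto
  moreover have "0 \<le> exp \<bar>z\<bar> * z\<^sup>2" by simp
  moreover have "exp t / fact 2 * z ^ 2 = exp t * z\<^sup>2 / 2" by (simp add: fact_numeral)
  moreover have "z\<^sup>2 * exp \<bar>z\<bar> = exp \<bar>z\<bar> * z\<^sup>2" by (rule mult.commute)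
  ultimately have "exp t / fact 2 * z ^ 2 \<le> z\<^sup>2 * exp \<bar>z\<bar>"
    by linarith
  moreover have "(\<Sum>m<2. z ^ m / fact m) = 1 + z" by (simp add: numeral_2_eq_2)
  ultimately show ?thesis using t(2) by simp
qed

lemma sq_exp_abs_le_gaussian:
  fixes e k :: real assumes k: "k > 0"
  shows "e\<^sup>2 * exp (2 * \<bar>e\<bar>) \<le> (2/k) * exp (2/k) * exp (k * e\<^sup>2)"
proof -
  have sq: "e\<^sup>2 \<le> (2/k) * exp (k * e\<^sup>2 / 2)"
  proof -
    have "k * e\<^sup>2 / 2 \<le> exp (k * e\<^sup>2 / 2)"
      using exp_ge_add_one_self[of "k * e\<^sup>2 / 2"] by linarith
    hence "(2/k) * (k * e\<^sup>2 / 2) \<le> (2/k) * exp (k * e\<^sup>2 / 2)"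
      using k by (intro mult_left_mono) auto
    thus ?thesis using k by simp
  qed
  have lin: "2 * \<bar>e\<bar> \<le> k * e\<^sup>2 / 2 + 2/k"
  proof -
    have "0 \<le> (k * \<bar>e\<bar> - 2)\<^sup>2 / (2*k)" using k by simp
    also have "\<dots> = k * e\<^sup>2 / 2 - 2 * \<bar>e\<bar> + 2/k"
      using k by (simp add: power2_eq_square field_simps)
    finally show ?thesis by simp
  qed
  have "e\<^sup>2 * exp (2 * \<bar>e\<bar>) \<le> (2/k) * exp (k * e\<^sup>2 / 2) * exp (k * e\<^sup>2 / 2 + 2/k)"
    using sq lin k by (intro mult_mono) auto
  also have "\<dots> = (2/k) * exp (2/k) * exp (k * e\<^sup>2)"
    by (simp add: mult_exp_exp)
  finally show ?thesis .
qed

text \<open>Standing assumptions on the law D of a single shock: mean zero and the moment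
  condition E[e^2 exp(2|e|)] < \<infinity> (implied by the Gaussian moment of (A4)).\<close>
locale noise_law =
  fixes D :: "real measure"
  assumes prob_D: "prob_space D" and sets_D: "sets D = sets borel"
    and integrable_id: "integrable D (\<lambda>e. e)" and mean_zero: "integral\<^sup>L D (\<lambda>e. e) = 0"
    and integrable_Q: "integrable D (\<lambda>e. e\<^sup>2 * exp (2 * \<bar>e\<bar>))"
begin

lemma borel_measurable_D: "f \<in> borel_measurable borel \<Longrightarrow> f \<in> borel_measurable D"
  using measurable_cong_sets[OF sets_D refl] by blast

definition E1 :: real where "E1 = integral\<^sup>L D (\<lambda>e. \<bar>e\<bar>)"
definition Q :: real where "Q = integral\<^sup>L D (\<lambda>e. e\<^sup>2 * exp (2 * \<bar>e\<bar>))"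

lemma E1_nonneg: "E1 \<ge> 0" unfolding E1_def by simp
lemma Q_nonneg: "Q \<ge> 0" unfolding Q_def by simp

lemma integrable_const: "integrable D (\<lambda>e. c::real)"
  using prob_D prob_space_def finite_measure.integrable_const by blast

lemma integrable_exp_linear:
  assumes "\<bar>a\<bar> \<le> 1" "\<bar>b\<bar> \<le> 1"
  shows "integrable D (\<lambda>e. exp (a * e + b * \<bar>e\<bar>))"
proof (rule Bochner_Integration.integrable_bound)
  show "integrable D (\<lambda>e. e\<^sup>2 * exp (2 * \<bar>e\<bar>) + exp 2)"
    using integrable_Q integrable_const by (rule Bochner_Integration.integrable_add)
  show "(\<lambda>e. exp (a * e + b * \<bar>e\<bar>)) \<in> borel_measurable D"
    by (intro borel_measurable_D) measurable
  show "AE e in D. norm (exp (a * e + b * \<bar>e\<bar>)) \<le> norm (e\<^sup>2 * exp (2 * \<bar>e\<bar>) + exp 2)"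
  proof (rule AE_I2)
    fix e :: real
    have "a * e \<le> \<bar>a\<bar> * \<bar>e\<bar>" "b * \<bar>e\<bar> \<le> \<bar>b\<bar> * \<bar>e\<bar>"
      by (metis abs_ge_self abs_mult, simp add: mult_right_mono)
    moreover have "\<bar>a\<bar> * \<bar>e\<bar> \<le> \<bar>e\<bar>" "\<bar>b\<bar> * \<bar>e\<bar> \<le> \<bar>e\<bar>"
      using assms by (simp_all add: mult_left_le_one_le)
    ultimately have "exp (a * e + b * \<bar>e\<bar>) \<le> exp (2 * \<bar>e\<bar>)" by simp
    also have "exp (2 * \<bar>e\<bar>) \<le> e\<^sup>2 * exp (2 * \<bar>e\<bar>) + exp 2"
    proof (cases "\<bar>e\<bar> \<le> 1")
      case True then show ?thesis by (simp add: add_increasing)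
    next
      case False
      hence "1 * exp (2 * \<bar>e\<bar>) \<le> e\<^sup>2 * exp (2 * \<bar>e\<bar>)"
        by (intro mult_right_mono) (use abs_square_le_1[of e] in auto)
      then show ?thesis using exp_gt_zero[of 2] by linarith
    qed
    finally show "norm (exp (a * e + b * \<bar>e\<bar>)) \<le> norm (e\<^sup>2 * exp (2 * \<bar>e\<bar>) + exp 2)"
      by (simp add: add_nonneg_nonneg)
  qed
qed

lemma exp_moment_bound:
  assumes "\<bar>a\<bar> \<le> 1" "\<bar>b\<bar> \<le> 1"
  shows "integral\<^sup>L D (\<lambda>e. exp (a * e + b * \<bar>e\<bar>)) \<le> exp (b * E1 + (\<bar>a\<bar> + \<bar>b\<bar>)\<^sup>2 * Q)"
proof -
  let ?c = "(\<bar>a\<bar> + \<bar>b\<bar>)\<^sup>2"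
  have pointwise: "exp (a * e + b * \<bar>e\<bar>) \<le> 1 + a * e + b * \<bar>e\<bar> + ?c * (e\<^sup>2 * exp (2 * \<bar>e\<bar>))" for e
  proof -
    let ?z = "a * e + b * \<bar>e\<bar>"
    have az: "\<bar>?z\<bar> \<le> (\<bar>a\<bar> + \<bar>b\<bar>) * \<bar>e\<bar>"
      using abs_triangle_ineq[of "a*e" "b*\<bar>e\<bar>"] by (simp add: abs_mult distrib_right)
    have "?z\<^sup>2 \<le> ((\<bar>a\<bar> + \<bar>b\<bar>) * \<bar>e\<bar>)\<^sup>2"
      using az by (metis abs_ge_zero order_trans power2_abs power_mono)
    hence z2: "?z\<^sup>2 \<le> ?c * e\<^sup>2" by (simp add: power_mult_distrib)
    have "(\<bar>a\<bar> + \<bar>b\<bar>) * \<bar>e\<bar> \<le> 2 * \<bar>e\<bar>" using assms by (intro mult_right_mono) auto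
    hence "exp \<bar>?z\<bar> \<le> exp (2 * \<bar>e\<bar>)" using az by simp
    hence "?z\<^sup>2 * exp \<bar>?z\<bar> \<le> (?c * e\<^sup>2) * exp (2 * \<bar>e\<bar>)"
      using z2 by (intro mult_mono) auto
    thus ?thesis using exp_le_second_order[of ?z] by (simp add: algebra_simps)
  qed
  have "integral\<^sup>L D (\<lambda>e. exp (a * e + b * \<bar>e\<bar>))
      \<le> integral\<^sup>L D (\<lambda>e. 1 + a * e + b * \<bar>e\<bar> + ?c * (e\<^sup>2 * exp (2 * \<bar>e\<bar>)))"
    using integrable_exp_linear[OF assms] pointwise integrable_const integrable_id integrable_Q
    by (intro integral_mono) auto
  also have "\<dots> = 1 + a * integral\<^sup>L D (\<lambda>e. e) + b * E1 + ?c * Q"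
    using integrable_const integrable_id integrable_Q prob_space.prob_space[OF prob_D]
    by (simp add: E1_def Q_def)
  also have "\<dots> = 1 + (b * E1 + ?c * Q)" using mean_zero by simp
  also have "\<dots> \<le> exp (b * E1 + ?c * Q)" by (rule exp_ge_add_one_self)
  finally show ?thesis .
qed

lemma exp_moment_bound_nn:
  assumes "\<bar>a\<bar> \<le> 1" "\<bar>b\<bar> \<le> 1"
  shows "(\<integral>\<^sup>+e. ennreal (exp (a * e + b * \<bar>e\<bar>)) \<partial>D) \<le> ennreal (exp (b * E1 + (\<bar>a\<bar> + \<bar>b\<bar>)\<^sup>2 * Q))"
  using exp_moment_bound[OF assms] integrable_exp_linear[OF assms]
  by (subst nn_integral_eq_integral) auto

lemma exp_abs_affine_bound:
  assumes "0 \<le> w" "w \<le> s" "0 \<le> \<theta>" "0 \<le> c" "c \<le> Sg" "s * Sg \<le> 1" "\<theta> * Sg \<le> 1"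
  shows "(\<integral>\<^sup>+e. ennreal (exp (-w * (m + c * e)) * exp (\<theta> * \<bar>y + c * e\<bar>)) \<partial>D)
    \<le> ennreal (exp (-w * m + \<theta> * \<bar>y\<bar> + (\<theta> * Sg * E1 + ((s + \<theta>) * Sg)\<^sup>2 * Q)))"
proof -
  define a where "a = -w * c"
  define b where "b = \<theta> * c"
  define C where "C = exp (-w * m + \<theta> * \<bar>y\<bar>)"
  have pointwise: "exp (-w * (m + c * e)) * exp (\<theta> * \<bar>y + c * e\<bar>) \<le> C * exp (a * e + b * \<bar>e\<bar>)" for e
  proof -
    have "\<theta> * \<bar>y + c * e\<bar> \<le> \<theta> * (\<bar>y\<bar> + c * \<bar>e\<bar>)"
      using assms abs_triangle_ineq[of y "c * e"] by (intro mult_left_mono) (auto simp: abs_mult)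
    thus ?thesis by (simp add: C_def a_def b_def flip: exp_add) (simp add: algebra_simps)
  qed
  have a: "\<bar>a\<bar> \<le> s * Sg" using assms by (simp add: a_def abs_mult mult_mono)
  have b: "\<bar>b\<bar> \<le> \<theta> * Sg" using assms by (simp add: b_def abs_mult mult_left_mono)
  have "(\<integral>\<^sup>+e. ennreal (exp (-w * (m + c * e)) * exp (\<theta> * \<bar>y + c * e\<bar>)) \<partial>D)
      \<le> (\<integral>\<^sup>+e. ennreal C * ennreal (exp (a * e + b * \<bar>e\<bar>)) \<partial>D)"
    using pointwise by (intro nn_integral_mono) (simp add: C_def ennreal_mult[symmetric])
  also have "\<dots> = ennreal C * (\<integral>\<^sup>+e. ennreal (exp (a * e + b * \<bar>e\<bar>)) \<partial>D)"
    by (intro nn_integral_cmult borel_measurable_D) measurable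
  also have "\<dots> \<le> ennreal C * ennreal (exp (b * E1 + (\<bar>a\<bar> + \<bar>b\<bar>)\<^sup>2 * Q))"
    using a b assms by (intro mult_left_mono exp_moment_bound_nn) auto
  also have "\<dots> \<le> ennreal C * ennreal (exp (\<theta> * Sg * E1 + ((s + \<theta>) * Sg)\<^sup>2 * Q))"
  proof -
    have "b * E1 \<le> \<theta> * Sg * E1" using b E1_nonneg by (intro mult_right_mono) auto
    moreover have "(\<bar>a\<bar> + \<bar>b\<bar>)\<^sup>2 \<le> ((s + \<theta>) * Sg)\<^sup>2"
      using a b by (intro power_mono) (auto simp: algebra_simps)
    hence "(\<bar>a\<bar> + \<bar>b\<bar>)\<^sup>2 * Q \<le> ((s + \<theta>) * Sg)\<^sup>2 * Q" using Q_nonneg by (intro mult_right_mono)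
    ultimately show ?thesis by (intro mult_left_mono) auto
  qed
  also have "\<dots> = ennreal (exp (-w * m + \<theta> * \<bar>y\<bar> + (\<theta> * Sg * E1 + ((s + \<theta>) * Sg)\<^sup>2 * Q)))"
    by (simp add: C_def ennreal_mult[symmetric] exp_add)
  finally show ?thesis .
qed

end

abbreviation next_state :: "(real \<Rightarrow> real) \<Rightarrow> (real \<Rightarrow> real) \<Rightarrow> real \<Rightarrow> real \<Rightarrow> real" where
  "next_state \<mu> \<sigma> x e \<equiv> x + \<mu> x + \<sigma> x * e"

abbreviation invested :: "(real \<Rightarrow> real) \<Rightarrow> real \<Rightarrow> real" where
  "invested \<mu> x \<equiv> indicator {y. 0 < \<mu> y} x"

abbreviation log_gain :: "(real \<Rightarrow> real) \<Rightarrow> (real \<Rightarrow> real) \<Rightarrow> real \<Rightarrow> real \<Rightarrow> real" where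
  "log_gain \<mu> \<sigma> x e \<equiv> invested \<mu> x * (\<mu> x + \<sigma> x * e)"

lemma nn_integral_indicator_affine:
  assumes G: "G \<in> sets borel" and c: "c > 0"
  shows "(\<integral>\<^sup>+e. indicator G (m + c * e) \<partial>lborel) = emeasure lborel G / ennreal c"
proof -
  have "emeasure lborel G = (\<integral>\<^sup>+e. indicator G e \<partial>lborel)" using G by simp
  also have "\<dots> = (\<integral>\<^sup>+e. indicator G (m + c * e) \<partial>lborel) * ennreal c"
    using G c by (subst nn_integral_real_affine[where c=c and t=m]) (auto simp: mult.commute)
  finally show ?thesis
    using c by (simp add: ennreal_mult_divide_eq)
qed

text \<open>Condition (RC+) provides a bounded set of positive Lebesgue measure on which the drift
  is bounded away from zero; the Lyapunov function below is lowered exactly on such a set.\<close>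
lemma positive_drift_set:
  fixes \<mu> :: "real \<Rightarrow> real"
  assumes [measurable]: "\<mu> \<in> borel_measurable borel" and RC: "emeasure lborel {x. 0 < \<mu> x} > 0"
  obtains G \<eta> N where "G \<in> sets borel" "0 < \<eta>" "\<And>y. y \<in> G \<Longrightarrow> \<eta> \<le> \<mu> y \<and> \<bar>y\<bar> \<le> N"
    "emeasure lborel G \<noteq> 0"
proof -
  define A where "A n = {x. 1 / real (Suc n) \<le> \<mu> x} \<inter> {- real n..real n}" for n
  have A_sets: "range A \<subseteq> sets lborel" by (auto simp: A_def)
  have "{x. 0 < \<mu> x} \<subseteq> (\<Union>n. A n)"
  proof
    fix x assume "x \<in> {x. 0 < \<mu> x}"
    hence mx: "0 < \<mu> x" by simp
    define n where "n = nat \<lceil>max \<bar>x\<bar> (1 / \<mu> x)\<rceil>"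
    have "\<bar>x\<bar> \<le> real n" "1 / \<mu> x \<le> real n" unfolding n_def by linarith+
    moreover from this(2) have "1 / real (Suc n) \<le> \<mu> x"
      using mx by (simp add: field_simps)
    ultimately show "x \<in> (\<Union>n. A n)" by (auto simp: A_def)
  qed
  hence "emeasure lborel {x. 0 < \<mu> x} \<le> emeasure lborel (\<Union>n. A n)"
    using A_sets by (intro emeasure_mono) auto
  with RC have "emeasure lborel (\<Union>n. A n) \<noteq> 0" by auto
  then obtain n where "emeasure lborel (A n) \<noteq> 0"
    using emeasure_UN_eq_0[OF _ A_sets] by blast
  moreover have "A n \<in> sets borel" by (simp add: A_def)
  ultimately show ?thesis
    by (intro that[of "A n" "1 / real (Suc n)" "real n"]) (auto simp: A_def)
qed

text \<open>The Markov chain x \<mapsto> x + \<mu> x + \<sigma> x e with shock law D, under (A1)-(A3) and (RC+) in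
  the form used below: local bounds on \<mu> and \<sigma>, contraction of x + \<mu> x outside a compact
  set, and a density of D bounded below on every compact interval.\<close>
locale drift_model = noise_law D for D +
  fixes \<mu> \<sigma> :: "real \<Rightarrow> real"
  assumes mu_meas [measurable]: "\<mu> \<in> borel_measurable borel"
    and sigma_meas [measurable]: "\<sigma> \<in> borel_measurable borel"
    and mu_locbdd: "\<And>R. \<exists>M. \<forall>x. \<bar>x\<bar> \<le> R \<longrightarrow> \<bar>\<mu> x\<bar> \<le> M"
    and sigma_pos: "\<And>x. \<sigma> x > 0"
    and sigma_away: "\<And>R. \<exists>a>0. \<forall>x. \<bar>x\<bar> \<le> R \<longrightarrow> a \<le> \<sigma> x"
    and sigma_bdd: "\<exists>C. \<forall>x. \<sigma> x \<le> C"
    and contraction: "\<exists>r<1. \<exists>R0. \<forall>x. R0 \<le> \<bar>x\<bar> \<longrightarrow> \<bar>x + \<mu> x\<bar> \<le> r * \<bar>x\<bar>"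
    and density_lower: "\<And>E0. \<exists>a>0. \<forall>f\<in>borel_measurable borel.
          ennreal a * (\<integral>\<^sup>+e. f e * indicator {-E0..E0} e \<partial>lborel) \<le> (\<integral>\<^sup>+e. f e \<partial>D)"
    and RC: "emeasure lborel {x. 0 < \<mu> x} > 0"
begin

lemma sigma_bound:
  obtains Sg where "\<And>x. \<sigma> x \<le> Sg" "0 < Sg"
  using sigma_bdd sigma_pos[of 0] by (meson less_le_trans)

lemma hit_probability_lower:
  assumes G [measurable]: "G \<in> sets borel"
    and a: "\<forall>f\<in>borel_measurable borel.
      ennreal a * (\<integral>\<^sup>+e. f e * indicator {-E0..E0} e \<partial>lborel) \<le> (\<integral>\<^sup>+e. f e \<partial>D)"
    and e_bdd: "\<And>e. next_state \<mu> \<sigma> x e \<in> G \<Longrightarrow> \<bar>e\<bar> \<le> E0"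
    and weight: "\<And>e. \<bar>e\<bar> \<le> E0 \<Longrightarrow> cw \<le> exp (-w * (\<mu> x + \<sigma> x * e))"
  shows "ennreal cw * (ennreal a * (emeasure lborel G / ennreal (\<sigma> x)))
    \<le> (\<integral>\<^sup>+e. ennreal (exp (-w * (\<mu> x + \<sigma> x * e)) * indicator G (next_state \<mu> \<sigma> x e)) \<partial>D)"
proof -
  have sp: "0 < \<sigma> x" by (rule sigma_pos)
  have "ennreal cw * (ennreal a * (emeasure lborel G / ennreal (\<sigma> x)))
      = ennreal cw * (ennreal a * (\<integral>\<^sup>+e. indicator G (x + \<mu> x + \<sigma> x * e) * indicator {-E0..E0} e \<partial>lborel))"
    by (subst nn_integral_indicator_affine[OF G sp, of "x + \<mu> x", symmetric], intro arg_cong2[where f="(*)"] refl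
        nn_integral_cong) (auto simp: indicator_def abs_le_iff dest!: e_bdd)
  also have "\<dots> \<le> ennreal cw * (\<integral>\<^sup>+e. indicator G (next_state \<mu> \<sigma> x e) \<partial>D)"
    using a by (intro mult_left_mono) auto
  also have "\<dots> = (\<integral>\<^sup>+e. ennreal cw * indicator G (next_state \<mu> \<sigma> x e) \<partial>D)"
    by (intro nn_integral_cmult[symmetric] borel_measurable_D) measurable
  also have "\<dots> \<le> (\<integral>\<^sup>+e. ennreal (exp (-w * (\<mu> x + \<sigma> x * e)) * indicator G (next_state \<mu> \<sigma> x e)) \<partial>D)"
    using weight e_bdd by (intro nn_integral_mono) (auto simp: indicator_def ennreal_leI)
  finally show ?thesis .
qed

lemma mass_lower_bound:
  assumes G [measurable]: "G \<in> sets borel" and G_bdd: "G \<subseteq> {-R..R}"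
    and G_pos: "emeasure lborel G \<noteq> 0"
  shows "\<exists>\<delta>>0. \<forall>x w. \<bar>x\<bar> \<le> R \<longrightarrow> 0 \<le> w \<longrightarrow> w \<le> 1 \<longrightarrow>
     ennreal \<delta> \<le> (\<integral>\<^sup>+e. ennreal (exp (-w * (\<mu> x + \<sigma> x * e)) * indicator G (next_state \<mu> \<sigma> x e)) \<partial>D)"
proof -
  obtain Sg where Sg: "\<And>x. \<sigma> x \<le> Sg" and Sg_pos: "0 < Sg"
    using sigma_bound by blast
  obtain Mm where Mm: "\<And>x. \<bar>x\<bar> \<le> R \<Longrightarrow> \<bar>\<mu> x\<bar> \<le> Mm" using mu_locbdd by blast
  obtain sc where sc: "0 < sc" "\<And>x. \<bar>x\<bar> \<le> R \<Longrightarrow> sc \<le> \<sigma> x" using sigma_away by blast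
  define E0 where "E0 = (2 * R + Mm) / sc"
  obtain a where a: "0 < a" "\<forall>f\<in>borel_measurable borel.
      ennreal a * (\<integral>\<^sup>+e. f e * indicator {-E0..E0} e \<partial>lborel) \<le> (\<integral>\<^sup>+e. f e \<partial>D)"
    using density_lower by blast
  have "emeasure lborel G \<le> emeasure lborel {-R..R}" using G_bdd by (intro emeasure_mono) auto
  hence "emeasure lborel G \<noteq> \<infinity>" by (cases "-R \<le> R") (auto simp: top_unique)
  then obtain mG where mG: "emeasure lborel G = ennreal mG" "0 < mG"
    using G_pos by (cases "emeasure lborel G") (auto simp: ennreal_less_zero_iff)
  define cw where "cw = exp (-(Mm + Sg * E0))"
  define \<delta> where "\<delta> = cw * a * mG / Sg"
  have "ennreal \<delta> \<le> (\<integral>\<^sup>+e. ennreal (exp (-w * (\<mu> x + \<sigma> x * e)) * indicator G (next_state \<mu> \<sigma> x e)) \<partial>D)"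
    if x: "\<bar>x\<bar> \<le> R" and w: "0 \<le> w" "w \<le> 1" for x w :: real
  proof -
    have sp: "0 < \<sigma> x" by (rule sigma_pos)
    have e_bdd: "\<bar>e\<bar> \<le> E0" if "next_state \<mu> \<sigma> x e \<in> G" for e
    proof -
      have "\<sigma> x * \<bar>e\<bar> \<le> \<bar>next_state \<mu> \<sigma> x e\<bar> + \<bar>x\<bar> + \<bar>\<mu> x\<bar>" using sp by (simp add: abs_mult)
      also have "\<dots> \<le> 2 * R + Mm"
        using subsetD[OF G_bdd that] x Mm[OF x] by (simp add: abs_le_iff) arith
      finally have "sc * \<bar>e\<bar> \<le> 2 * R + Mm"
        using sc(2)[OF x] by (meson abs_ge_zero mult_right_mono order_trans)
      thus ?thesis using sc(1) by (simp add: E0_def pos_le_divide_eq mult.commute)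
    qed
    have weight: "cw \<le> exp (-w * (\<mu> x + \<sigma> x * e))" if "\<bar>e\<bar> \<le> E0" for e
    proof -
      have "w * (\<mu> x + \<sigma> x * e) \<le> w * \<bar>\<mu> x + \<sigma> x * e\<bar>"
        using w by (intro mult_left_mono) auto
      also have "\<dots> \<le> 1 * \<bar>\<mu> x + \<sigma> x * e\<bar>"
        using w by (intro mult_right_mono) auto
      also have "\<dots> \<le> \<bar>\<mu> x\<bar> + \<sigma> x * \<bar>e\<bar>" using sp abs_triangle_ineq[of "\<mu> x" "\<sigma> x * e"] by (simp add: abs_mult)
      also have "\<dots> \<le> Mm + Sg * E0" using Mm[OF x] Sg[of x] sp that by (intro add_mono mult_mono) auto
      finally show ?thesis by (simp add: cw_def)
    qed
    have "\<delta> \<le> cw * a * (mG / \<sigma> x)"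
      using Sg[of x] sp mG a by (simp add: \<delta>_def cw_def divide_left_mono)
    hence "ennreal \<delta> \<le> ennreal (cw * (a * (mG / \<sigma> x)))"
      by (intro ennreal_leI) (simp add: mult.assoc)
    also have "\<dots> = ennreal cw * (ennreal a * (emeasure lborel G / ennreal (\<sigma> x)))"
      using mG sp a by (simp add: divide_ennreal cw_def flip: ennreal_mult)
    also have "\<dots> \<le> (\<integral>\<^sup>+e. ennreal (exp (-w * (\<mu> x + \<sigma> x * e)) * indicator G (next_state \<mu> \<sigma> x e)) \<partial>D)"
      using e_bdd weight by (intro hit_probability_lower[OF G a(2)])
    finally show ?thesis .
  qed
  moreover have "0 < \<delta>" using a mG Sg_pos by (simp add: \<delta>_def cw_def)
  ultimately show ?thesis by blast
qed

end

lemma ennreal_le_diff: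
  assumes "A + B \<le> ennreal T" "ennreal c \<le> B" "0 \<le> c" "0 \<le> T"
  shows "A \<le> ennreal (T - c)"
proof -
  have sum: "A + ennreal c \<le> ennreal T" using assms(1,2) by (meson add_left_mono order_trans)
  hence "A \<noteq> \<infinity>" by (auto simp: top_unique)
  then obtain a where a: "0 \<le> a" "A = ennreal a" by (cases A) auto
  have "a + c \<le> T" using sum a assms(3,4) by (simp flip: ennreal_plus)
  thus ?thesis using a by (simp add: ennreal_leI)
qed

text \<open>The two exponents can be chosen: s small against the scale of the noise and of the
  region [-R, R], and \<theta> of order s^2 but also small against s \<eta> \<delta>.\<close>
lemma small_exponents_exist:
  fixes Sg R \<eta> \<delta> K Q :: real
  assumes Sg: "0 < Sg" and R: "0 \<le> R" and \<eta>: "0 < \<eta>" and \<delta>: "0 < \<delta>"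
    and K: "0 < K" and Q: "0 \<le> Q"
  shows "\<exists>s \<theta>. 0 < \<theta> \<and> \<theta> \<le> s \<and> \<theta> * R \<le> 1 \<and> s \<le> 1 \<and> s * Sg \<le> 1 \<and> s * \<eta> \<le> 1 \<and>
      8 * s\<^sup>2 * Sg\<^sup>2 * Q \<le> \<theta> \<and> 24 * \<theta> * K \<le> s * \<eta> * \<delta>"
proof -
  define \<tau> where "\<tau> = min 1 (\<eta> * \<delta> / (24 * K))"
  define s where "s = Min {1, 1 / Sg, 1 / (\<eta> + 1), 1 / (R + 1), \<tau> / (8 * Sg\<^sup>2 * Q + 1)}"
  have \<tau>: "0 < \<tau>" "\<tau> \<le> 1" "24 * \<tau> * K \<le> \<eta> * \<delta>"
    using \<eta> \<delta> K by (auto simp: \<tau>_def min_def field_simps)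
  have Q8: "0 < 8 * Sg\<^sup>2 * Q + 1" using Q by (simp add: add_nonneg_pos)
  have s_pos: "0 < s" using Sg \<eta> R \<tau> Q8 by (simp add: s_def)
  have "s \<le> 1" "s \<le> 1 / Sg" "s \<le> 1 / (\<eta> + 1)" "s \<le> 1 / (R + 1)" "s \<le> \<tau> / (8 * Sg\<^sup>2 * Q + 1)"
    by (simp_all add: s_def)
  hence s: "s \<le> 1" "s * Sg \<le> 1" "s * \<eta> \<le> 1" "s * R \<le> 1" "s * (8 * Sg\<^sup>2 * Q) \<le> \<tau>"
    using Sg \<eta> R Q8 s_pos by (simp_all add: field_simps)
  define \<theta> where "\<theta> = \<tau> * s"
  have "0 < \<theta>" "\<theta> \<le> s" using \<tau> s_pos by (simp_all add: \<theta>_def mult_left_le_one_le)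
  moreover have "\<theta> * R \<le> 1" using \<open>\<theta> \<le> s\<close> s(4) R by (meson mult_right_mono order_trans)
  moreover have "8 * s\<^sup>2 * Sg\<^sup>2 * Q \<le> \<theta>"
    using mult_left_mono[OF s(5), of s] s_pos by (simp add: \<theta>_def power2_eq_square algebra_simps)
  moreover have "24 * \<theta> * K \<le> s * \<eta> * \<delta>"
    using mult_left_mono[OF \<tau>(3), of s] s_pos by (simp add: \<theta>_def algebra_simps)
  ultimately show ?thesis using s by (intro exI[of _ s] exI[of _ \<theta>]) simp
qed

text \<open>Concrete constants for the drift argument: a bound Sg on \<sigma>, a radius R beyond which
  x + \<mu> x contracts by the factor r, a set G \<subseteq> (-R, R) where \<mu> \<ge> \<eta> and which is hit with
  probability at least \<delta> from [-R, R], and the two small exponents: s (the power of the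
  wealth) and \<theta> (the slope of the Lyapunov function), with \<theta> much smaller than s.\<close>
locale drift_parameters = drift_model D \<mu> \<sigma> for D \<mu> \<sigma> +
  fixes Sg r R Mm \<eta> \<delta> s \<theta> :: real and G :: "real set"
  assumes Sg: "\<And>x. \<sigma> x \<le> Sg"
    and r: "0 \<le> r" "r < 1" and contract: "\<And>x. R \<le> \<bar>x\<bar> \<Longrightarrow> \<bar>x + \<mu> x\<bar> \<le> r * \<bar>x\<bar>"
    and R_large: "Sg * E1 + 1 \<le> (1 - r) * R"
    and Mm: "\<And>x. \<bar>x\<bar> \<le> R \<Longrightarrow> \<bar>\<mu> x\<bar> \<le> Mm"
    and G_sets [measurable]: "G \<in> sets borel"
    and G: "\<And>y. y \<in> G \<Longrightarrow> \<eta> \<le> \<mu> y \<and> \<bar>y\<bar> < R"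
    and eta: "0 < \<eta>"
    and delta: "0 < \<delta>" "\<delta> \<le> 1"
    and hit_G: "\<And>x w. \<bar>x\<bar> \<le> R \<Longrightarrow> 0 \<le> w \<Longrightarrow> w \<le> 1 \<Longrightarrow>
      ennreal \<delta> \<le> (\<integral>\<^sup>+e. ennreal (exp (-w * (\<mu> x + \<sigma> x * e)) * indicator G (next_state \<mu> \<sigma> x e)) \<partial>D)"
    and theta: "0 < \<theta>" "\<theta> \<le> s" "\<theta> * R \<le> 1"
    and s: "s \<le> 1" "s * Sg \<le> 1" "s * \<eta> \<le> 1" "8 * s\<^sup>2 * Sg\<^sup>2 * Q \<le> \<theta>"
    and theta_small: "24 * \<theta> * (Mm + Sg * E1 + 1) \<le> s * \<eta> * \<delta>"
begin

lemma Sg_pos: "0 < Sg" using sigma_pos[of 0] Sg[of 0] by linarith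

lemma Mm_nonneg: "0 \<le> Mm"
proof -
  have "0 \<le> Sg * E1" using Sg_pos E1_nonneg by simp
  hence "0 < (1 - r) * R" using R_large by linarith
  hence "0 < R" using r by (simp add: zero_less_mult_iff)
  thus ?thesis using Mm[of 0] by simp
qed

definition \<beta> :: real where "\<beta> = exp (-(s * \<eta> / 2))"

definition U :: real where "U = \<theta> * Sg * E1 + ((s + \<theta>) * Sg)\<^sup>2 * Q"

definition lyap :: "real \<Rightarrow> real" where
  "lyap y = (1 - (1 - \<beta>) * indicator G y) * exp (\<theta> * \<bar>y\<bar>)"

text \<open>Since s \<eta> \<le> 1, the factor \<beta> removes a fraction at least s \<eta> / 4.\<close>
lemma beta: "0 < \<beta>" "\<beta> \<le> 1" "s * \<eta> / 4 \<le> 1 - \<beta>"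
proof -
  show "0 < \<beta>" "\<beta> \<le> 1" using theta eta by (auto simp: \<beta>_def)
  define v where "v = s * \<eta> / 2"
  have v: "0 \<le> v" "v \<le> 1 / 2" using theta eta s by (auto simp: v_def)
  have "\<beta> * (1 + v) \<le> \<beta> * exp v" using \<open>0 < \<beta>\<close> exp_ge_add_one_self[of v] by simp
  also have "\<dots> = 1" by (simp add: \<beta>_def v_def flip: exp_add)
  finally have "\<beta> * (1 + v) \<le> 1" .
  moreover have "1 \<le> (1 - v / 2) * (1 + v)"
  proof -
    have "v * v \<le> v * 1" using v by (intro mult_left_mono) auto
    moreover have "(1 - v / 2) * (1 + v) = 1 + v / 2 - v * v / 2" by (simp add: field_simps)
    ultimately show ?thesis using v by linarith
  qed
  ultimately have "\<beta> * (1 + v) \<le> (1 - v / 2) * (1 + v)" by linarith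
  hence "\<beta> \<le> 1 - v / 2" using v by simp
  thus "s * \<eta> / 4 \<le> 1 - \<beta>" by (simp add: v_def)
qed

text \<open>The quadratic part of the growth exponent U is at most \<theta>/2, because \<theta> \<ge> 8 s^2 Sg^2 Q.\<close>
lemma U_small: "U + \<theta> / 2 \<le> \<theta> * Sg * E1 + \<theta>"
proof -
  have "((s + \<theta>) * Sg)\<^sup>2 * Q \<le> (2 * s * Sg)\<^sup>2 * Q"
    using theta Sg_pos Q_nonneg by (intro mult_right_mono power_mono) auto
  also have "\<dots> = (8 * s\<^sup>2 * Sg\<^sup>2 * Q) / 2" by (simp add: power_mult_distrib)
  also have "\<dots> \<le> \<theta> / 2" using s(4) by (rule divide_right_mono) simp
  finally show ?thesis by (simp add: U_def)
qed

lemma lyap_measurable [measurable]: "lyap \<in> borel_measurable borel"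
  unfolding lyap_def by measurable

lemma lyap_outside: "y \<notin> G \<Longrightarrow> lyap y = exp (\<theta> * \<bar>y\<bar>)"
  and lyap_inside: "y \<in> G \<Longrightarrow> lyap y = \<beta> * exp (\<theta> * \<bar>y\<bar>)"
  by (simp_all add: lyap_def)

lemma lyap_le: "lyap y \<le> exp (\<theta> * \<bar>y\<bar>)"
  using beta by (cases "y \<in> G") (simp_all add: lyap_outside lyap_inside)

lemma lyap_ge: "\<beta> \<le> lyap y"
proof -
  have "1 \<le> exp (\<theta> * \<bar>y\<bar>)" using theta by simp
  hence "\<beta> \<le> exp (\<theta> * \<bar>y\<bar>)" using beta(2) by linarith
  moreover have "\<beta> * 1 \<le> \<beta> * exp (\<theta> * \<bar>y\<bar>)" using beta theta by (intro mult_left_mono) auto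
  ultimately show ?thesis
    using beta by (cases "y \<in> G") (simp_all add: lyap_outside lyap_inside)
qed

lemma invested_bounds: "0 \<le> invested \<mu> x" "invested \<mu> x \<le> 1" "0 \<le> invested \<mu> x * \<mu> x"
  by (simp_all add: indicator_def)

lemma invested_gain_nonpos: "-s * (invested \<mu> x * \<mu> x) \<le> 0"
  using invested_bounds(3)[of x] theta by simp

lemma exp_abs_step_bound:
  "(\<integral>\<^sup>+e. ennreal (exp (-s * log_gain \<mu> \<sigma> x e) * exp (\<theta> * \<bar>next_state \<mu> \<sigma> x e\<bar>)) \<partial>D)
    \<le> ennreal (exp (-s * (invested \<mu> x * \<mu> x) + \<theta> * \<bar>x + \<mu> x\<bar> + U))"
proof -
  have w: "0 \<le> s * invested \<mu> x" "s * invested \<mu> x \<le> s"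
    using invested_bounds[of x] theta by (simp_all add: mult_left_le)
  have "\<theta> * Sg \<le> s * Sg" using theta Sg_pos by (intro mult_right_mono) auto
  hence thSg: "\<theta> * Sg \<le> 1" using s by linarith
  have "(\<integral>\<^sup>+e. ennreal (exp (-(s * invested \<mu> x) * (\<mu> x + \<sigma> x * e)) * exp (\<theta> * \<bar>(x + \<mu> x) + \<sigma> x * e\<bar>)) \<partial>D)
    \<le> ennreal (exp (-(s * invested \<mu> x) * \<mu> x + \<theta> * \<bar>x + \<mu> x\<bar> + U))"
    unfolding U_def using w theta s thSg Sg[of x] sigma_pos[of x]
    by (intro exp_abs_affine_bound) auto
  thus ?thesis by (simp add: mult.assoc add.assoc)
qed

lemma lyap_step_bound:
  "(\<integral>\<^sup>+e. ennreal (exp (-s * log_gain \<mu> \<sigma> x e) * lyap (next_state \<mu> \<sigma> x e)) \<partial>D)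
    \<le> ennreal (exp (-s * (invested \<mu> x * \<mu> x) + \<theta> * \<bar>x + \<mu> x\<bar> + U))"
  by (rule order_trans[OF nn_integral_mono exp_abs_step_bound])
    (intro ennreal_leI mult_left_mono lyap_le; simp)

text \<open>Far from the origin the contraction (A3) makes exp(\<theta>|x|) decrease geometrically.\<close>
lemma drift_far:
  assumes x: "R \<le> \<bar>x\<bar>"
  shows "(\<integral>\<^sup>+e. ennreal (exp (-s * log_gain \<mu> \<sigma> x e) * lyap (next_state \<mu> \<sigma> x e)) \<partial>D)
    \<le> ennreal (exp (-(\<theta> / 2)) * lyap x)"
proof -
  have "x \<notin> G" using G x by force
  have "\<theta> * \<bar>x + \<mu> x\<bar> \<le> \<theta> * (r * \<bar>x\<bar>)" using contract[OF x] theta by (intro mult_left_mono) auto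
  moreover have "\<theta> * (Sg * E1 + 1) \<le> \<theta> * ((1 - r) * \<bar>x\<bar>)"
    using R_large x r theta by (intro mult_left_mono) (auto intro: order_trans mult_left_mono)
  moreover have "\<theta> * (Sg * E1 + 1) = \<theta> * Sg * E1 + \<theta>"
    "\<theta> * ((1 - r) * \<bar>x\<bar>) = \<theta> * \<bar>x\<bar> - \<theta> * (r * \<bar>x\<bar>)" by (simp_all add: algebra_simps)
  ultimately have "-s * (invested \<mu> x * \<mu> x) + \<theta> * \<bar>x + \<mu> x\<bar> + U \<le> -(\<theta> / 2) + \<theta> * \<bar>x\<bar>"
    using U_small invested_gain_nonpos[of x] by linarith
  hence "exp (-s * (invested \<mu> x * \<mu> x) + \<theta> * \<bar>x + \<mu> x\<bar> + U) \<le> exp (-(\<theta> / 2)) * lyap x"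
    using \<open>x \<notin> G\<close> by (simp add: lyap_outside flip: exp_add)
  thus ?thesis using lyap_step_bound by (meson ennreal_leI order_trans)
qed

text \<open>On G the strategy earns the drift \<ge> \<eta>, which pays for the factor 1/\<beta> by which the
  Lyapunov function was lowered there.\<close>
lemma drift_on_G:
  assumes x: "x \<in> G"
  shows "(\<integral>\<^sup>+e. ennreal (exp (-s * log_gain \<mu> \<sigma> x e) * lyap (next_state \<mu> \<sigma> x e)) \<partial>D)
    \<le> ennreal (exp (-(\<theta> / 2)) * lyap x)"
proof -
  have mu: "\<eta> \<le> \<mu> x" "\<bar>\<mu> x\<bar> \<le> Mm" using G[OF x] Mm[of x] by auto
  hence inv: "-s * (invested \<mu> x * \<mu> x) = -(s * \<mu> x)" using eta by simp
  have "\<theta> * \<bar>x + \<mu> x\<bar> \<le> \<theta> * (\<bar>x\<bar> + Mm)"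
    using theta mu by (intro mult_left_mono) (auto intro: order_trans[OF abs_triangle_ineq])
  moreover have "\<theta> * (\<bar>x\<bar> + Mm) = \<theta> * \<bar>x\<bar> + \<theta> * Mm" by (simp add: algebra_simps)
  moreover have "s * \<eta> \<le> s * \<mu> x" using theta mu by (intro mult_left_mono) auto
  moreover have "24 * (\<theta> * (Mm + Sg * E1 + 1)) \<le> s * \<eta>"
  proof -
    have "s * \<eta> * \<delta> \<le> s * \<eta>" using delta theta eta by (intro mult_left_le) auto
    thus ?thesis using order_trans[OF theta_small] by (simp add: mult.assoc)
  qed
  moreover have "\<theta> * (Mm + Sg * E1 + 1) = \<theta> * Mm + \<theta> * Sg * E1 + \<theta>" by (simp add: algebra_simps)
  ultimately have "-s * (invested \<mu> x * \<mu> x) + \<theta> * \<bar>x + \<mu> x\<bar> + U \<le> -(\<theta> / 2) + (-(s * \<eta> / 2) + \<theta> * \<bar>x\<bar>)"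
    using U_small mult_pos_pos[OF order.strict_trans2[OF theta(1,2)] eta] unfolding inv by linarith
  hence "exp (-s * (invested \<mu> x * \<mu> x) + \<theta> * \<bar>x + \<mu> x\<bar> + U) \<le> exp (-(\<theta> / 2)) * lyap x"
    using x by (simp add: lyap_inside \<beta>_def flip: exp_add)
  thus ?thesis using lyap_step_bound by (meson ennreal_leI order_trans)
qed

lemma lyap_complement:
  "(\<integral>\<^sup>+e. ennreal (exp (-s * log_gain \<mu> \<sigma> x e) * lyap (next_state \<mu> \<sigma> x e)) \<partial>D)
   + (\<integral>\<^sup>+e. ennreal (exp (-s * log_gain \<mu> \<sigma> x e) *
        ((1 - \<beta>) * indicator G (next_state \<mu> \<sigma> x e) * exp (\<theta> * \<bar>next_state \<mu> \<sigma> x e\<bar>))) \<partial>D)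
   = (\<integral>\<^sup>+e. ennreal (exp (-s * log_gain \<mu> \<sigma> x e) * exp (\<theta> * \<bar>next_state \<mu> \<sigma> x e\<bar>)) \<partial>D)"
proof (subst nn_integral_add[symmetric])
  show "(\<integral>\<^sup>+e. ennreal (exp (-s * log_gain \<mu> \<sigma> x e) * lyap (next_state \<mu> \<sigma> x e)) +
      ennreal (exp (-s * log_gain \<mu> \<sigma> x e) *
        ((1 - \<beta>) * indicator G (next_state \<mu> \<sigma> x e) * exp (\<theta> * \<bar>next_state \<mu> \<sigma> x e\<bar>))) \<partial>D)
    = (\<integral>\<^sup>+e. ennreal (exp (-s * log_gain \<mu> \<sigma> x e) * exp (\<theta> * \<bar>next_state \<mu> \<sigma> x e\<bar>)) \<partial>D)"
    using beta lyap_ge[of "next_state \<mu> \<sigma> x _"]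
    by (intro nn_integral_cong) (auto simp: lyap_def indicator_def algebra_simps simp flip: ennreal_plus)
qed (intro borel_measurable_D; measurable)+

lemma removed_mass_lower:
  assumes x: "\<bar>x\<bar> \<le> R"
  shows "ennreal ((1 - \<beta>) * \<delta>) \<le> (\<integral>\<^sup>+e. ennreal (exp (-s * log_gain \<mu> \<sigma> x e) *
        ((1 - \<beta>) * indicator G (next_state \<mu> \<sigma> x e) * exp (\<theta> * \<bar>next_state \<mu> \<sigma> x e\<bar>))) \<partial>D)"
proof -
  have w: "0 \<le> s * invested \<mu> x" "s * invested \<mu> x \<le> 1"
    using invested_bounds[of x] theta s by (auto intro: mult_le_one)
  have "ennreal ((1 - \<beta>) * \<delta>) = ennreal (1 - \<beta>) * ennreal \<delta>"
    using beta delta by (simp add: ennreal_mult)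
  also have "\<dots> \<le> ennreal (1 - \<beta>) * (\<integral>\<^sup>+e. ennreal (exp (-(s * invested \<mu> x) * (\<mu> x + \<sigma> x * e))
      * indicator G (next_state \<mu> \<sigma> x e)) \<partial>D)"
    using hit_G[OF x w] by (intro mult_left_mono) auto
  also have "\<dots> = (\<integral>\<^sup>+e. ennreal (1 - \<beta>) * ennreal (exp (-(s * invested \<mu> x) * (\<mu> x + \<sigma> x * e))
      * indicator G (next_state \<mu> \<sigma> x e)) \<partial>D)"
    by (intro nn_integral_cmult[symmetric] borel_measurable_D) measurable
  also have "\<dots> \<le> (\<integral>\<^sup>+e. ennreal (exp (-s * log_gain \<mu> \<sigma> x e) *
        ((1 - \<beta>) * indicator G (next_state \<mu> \<sigma> x e) * exp (\<theta> * \<bar>next_state \<mu> \<sigma> x e\<bar>))) \<partial>D)"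
  proof (intro nn_integral_mono)
    fix e
    have "(1 - \<beta>) * (exp (-(s * invested \<mu> x) * (\<mu> x + \<sigma> x * e)) * 1)
      \<le> (1 - \<beta>) * (exp (-s * log_gain \<mu> \<sigma> x e) * exp (\<theta> * \<bar>next_state \<mu> \<sigma> x e\<bar>))"
      using beta theta by (intro mult_left_mono) (auto simp: mult.assoc)
    thus "ennreal (1 - \<beta>) * ennreal (exp (-(s * invested \<mu> x) * (\<mu> x + \<sigma> x * e))
        * indicator G (next_state \<mu> \<sigma> x e))
      \<le> ennreal (exp (-s * log_gain \<mu> \<sigma> x e) *
        ((1 - \<beta>) * indicator G (next_state \<mu> \<sigma> x e) * exp (\<theta> * \<bar>next_state \<mu> \<sigma> x e\<bar>)))"
      using beta by (auto simp: indicator_def ennreal_mult[symmetric] ennreal_leI algebra_simps)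
  qed
  finally show ?thesis .
qed

text \<open>In the bounded region the growth of exp(\<theta>|x|) is of order \<theta>, which the removed mass
  of order s \<eta> \<delta> outweighs because \<theta> was chosen small against s \<eta> \<delta>.\<close>
lemma middle_growth:
  assumes x: "\<bar>x\<bar> < R"
  shows "exp (-s * (invested \<mu> x * \<mu> x) + \<theta> * \<bar>x + \<mu> x\<bar> + U) - (1 - \<beta>) * \<delta>
    \<le> exp (-(\<theta> / 2)) * exp (\<theta> * \<bar>x\<bar>)"
proof -
  define K where "K = Mm + Sg * E1 + 1"
  define u where "u = \<theta> * Mm + U + \<theta> / 2"
  have u: "0 \<le> u" "u \<le> \<theta> * K" using theta Mm_nonneg Sg_pos E1_nonneg Q_nonneg U_small
    by (auto simp: u_def U_def K_def algebra_simps)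
  have thK: "24 * (\<theta> * K) \<le> s * \<eta> * \<delta>" using theta_small by (simp add: K_def mult.assoc)
  have "s * \<eta> * \<delta> \<le> 1" using s eta theta delta by (metis mult_le_one mult_nonneg_nonneg order.strict_implies_order order_trans)
  hence u1: "u \<le> 1" using u thK by linarith
  have "\<theta> * \<bar>x + \<mu> x\<bar> \<le> \<theta> * (\<bar>x\<bar> + Mm)"
    using theta Mm[of x] x by (intro mult_left_mono) (auto intro: order_trans[OF abs_triangle_ineq])
  hence "-s * (invested \<mu> x * \<mu> x) + \<theta> * \<bar>x + \<mu> x\<bar> + U \<le> \<theta> * \<bar>x\<bar> - \<theta> / 2 + u"
    using invested_gain_nonpos[of x] by (simp add: u_def algebra_simps)
  hence "exp (-s * (invested \<mu> x * \<mu> x) + \<theta> * \<bar>x + \<mu> x\<bar> + U)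
      \<le> exp (-(\<theta> / 2)) * exp (\<theta> * \<bar>x\<bar>) * exp u" by (simp flip: exp_add)
  also have "\<dots> \<le> exp (-(\<theta> / 2)) * exp (\<theta> * \<bar>x\<bar>) * (1 + 2 * u)"
    using exp_bound[OF u(1) u1] u u1 mult_left_le[of u u] by (intro mult_left_mono) (auto simp: power2_eq_square)
  also have "\<dots> \<le> exp (-(\<theta> / 2)) * exp (\<theta> * \<bar>x\<bar>) + 3 * (2 * u)"
  proof -
    have "\<theta> * \<bar>x\<bar> \<le> 1" using theta x by (meson abs_ge_zero less_imp_le mult_left_mono order_trans)
    hence "exp (-(\<theta> / 2)) * exp (\<theta> * \<bar>x\<bar>) \<le> 1 * 3"
      using theta exp_le by (intro mult_mono) (auto intro: order_trans[of _ "exp 1"])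
    from mult_left_mono[OF this, of "2 * u"] show ?thesis using u by (simp add: algebra_simps)
  qed
  also have "\<dots> \<le> exp (-(\<theta> / 2)) * exp (\<theta> * \<bar>x\<bar>) + (1 - \<beta>) * \<delta>"
    using u thK beta(3) delta mult_right_mono[OF beta(3), of \<delta>] by (simp add: algebra_simps)
  finally show ?thesis by simp
qed

text \<open>Drift in the bounded region off G: the bound for exp(\<theta>|y|) minus the removed mass.\<close>
lemma drift_middle:
  assumes x: "\<bar>x\<bar> < R" "x \<notin> G"
  shows "(\<integral>\<^sup>+e. ennreal (exp (-s * log_gain \<mu> \<sigma> x e) * lyap (next_state \<mu> \<sigma> x e)) \<partial>D)
    \<le> ennreal (exp (-(\<theta> / 2)) * lyap x)"
proof -
  have "(\<integral>\<^sup>+e. ennreal (exp (-s * log_gain \<mu> \<sigma> x e) * lyap (next_state \<mu> \<sigma> x e)) \<partial>D)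
    \<le> ennreal (exp (-s * (invested \<mu> x * \<mu> x) + \<theta> * \<bar>x + \<mu> x\<bar> + U) - (1 - \<beta>) * \<delta>)"
  proof (rule ennreal_le_diff)
    show "(\<integral>\<^sup>+e. ennreal (exp (-s * log_gain \<mu> \<sigma> x e) * lyap (next_state \<mu> \<sigma> x e)) \<partial>D)
      + (\<integral>\<^sup>+e. ennreal (exp (-s * log_gain \<mu> \<sigma> x e) *
        ((1 - \<beta>) * indicator G (next_state \<mu> \<sigma> x e) * exp (\<theta> * \<bar>next_state \<mu> \<sigma> x e\<bar>))) \<partial>D)
      \<le> ennreal (exp (-s * (invested \<mu> x * \<mu> x) + \<theta> * \<bar>x + \<mu> x\<bar> + U))"
      unfolding lyap_complement by (rule exp_abs_step_bound)
    show "ennreal ((1 - \<beta>) * \<delta>) \<le> (\<integral>\<^sup>+e. ennreal (exp (-s * log_gain \<mu> \<sigma> x e) *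
        ((1 - \<beta>) * indicator G (next_state \<mu> \<sigma> x e) * exp (\<theta> * \<bar>next_state \<mu> \<sigma> x e\<bar>))) \<partial>D)"
      using x by (intro removed_mass_lower) simp
  qed (use beta delta in auto)
  also have "\<dots> \<le> ennreal (exp (-(\<theta> / 2)) * lyap x)"
    using middle_growth[OF x(1)] by (intro ennreal_leI) (simp add: lyap_outside[OF x(2)])
  finally show ?thesis .
qed

lemma lyap_drift:
  "(\<integral>\<^sup>+e. ennreal (exp (-s * log_gain \<mu> \<sigma> x e) * lyap (next_state \<mu> \<sigma> x e)) \<partial>D)
    \<le> ennreal (exp (-(\<theta> / 2)) * lyap x)"
proof -
  consider "R \<le> \<bar>x\<bar>" | "x \<in> G" | "\<bar>x\<bar> < R" "x \<notin> G" by fastforce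
  thus ?thesis using drift_far drift_on_G drift_middle by cases blast+
qed

end

context drift_model
begin

text \<open>All constants of drift_parameters can be chosen: G by (RC+), R by (A3), \<delta> by the
  irreducibility estimate, and finally s and \<theta>.\<close>
lemma drift_parameters_exist:
  obtains Sg r R Mm \<eta> \<delta> s \<theta> G where "drift_parameters D \<mu> \<sigma> Sg r R Mm \<eta> \<delta> s \<theta> G"
proof -
  obtain Sg where Sg: "\<And>x. \<sigma> x \<le> Sg" and Sg_pos: "0 < Sg"
    using sigma_bound by blast
  obtain r0 R0 where r0: "r0 < 1" "\<And>x. R0 \<le> \<bar>x\<bar> \<Longrightarrow> \<bar>x + \<mu> x\<bar> \<le> r0 * \<bar>x\<bar>"
    using contraction by blast
  define r where "r = max r0 0"
  have r: "0 \<le> r" "r < 1" using r0 by (auto simp: r_def)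
  have r_contr: "\<bar>x + \<mu> x\<bar> \<le> r * \<bar>x\<bar>" if "R0 \<le> \<bar>x\<bar>" for x
    using order_trans[OF r0(2)[OF that] mult_right_mono[of r0 r "\<bar>x\<bar>"]] by (simp add: r_def)
  obtain G \<eta> N where G: "G \<in> sets borel" "0 < \<eta>" "\<And>y. y \<in> G \<Longrightarrow> \<eta> \<le> \<mu> y \<and> \<bar>y\<bar> \<le> N"
    "emeasure lborel G \<noteq> 0"
    using positive_drift_set[OF mu_meas RC] by blast
  define R where "R = max R0 (max (N + 1) ((Sg * E1 + 1) / (1 - r)))"
  have R: "R0 \<le> R" "N + 1 \<le> R" "(Sg * E1 + 1) / (1 - r) \<le> R" by (simp_all add: R_def)
  hence R_large: "Sg * E1 + 1 \<le> (1 - r) * R" using r by (simp add: pos_divide_le_eq mult.commute)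
  have G_R: "\<eta> \<le> \<mu> y \<and> \<bar>y\<bar> < R" if "y \<in> G" for y using G(3)[OF that] R(2) by auto
  obtain Mm where Mm: "\<And>x. \<bar>x\<bar> \<le> R \<Longrightarrow> \<bar>\<mu> x\<bar> \<le> Mm" using mu_locbdd by blast
  have "0 \<le> Sg * E1" using Sg_pos E1_nonneg by simp
  hence "0 < (1 - r) * R" using R_large by linarith
  hence "0 < R" using r by (simp add: zero_less_mult_iff)
  hence Mm_nonneg: "0 \<le> Mm" using Mm[of 0] by simp
  have G_sub: "G \<subseteq> {-R..R}" using G_R by fastforce
  obtain \<delta>0 where \<delta>0: "0 < \<delta>0" "\<And>x w. \<bar>x\<bar> \<le> R \<Longrightarrow> 0 \<le> w \<Longrightarrow> w \<le> 1 \<Longrightarrow>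
      ennreal \<delta>0 \<le> (\<integral>\<^sup>+e. ennreal (exp (-w * (\<mu> x + \<sigma> x * e)) * indicator G (next_state \<mu> \<sigma> x e)) \<partial>D)"
    using mass_lower_bound[OF G(1) G_sub G(4)] by blast
  define \<delta> where "\<delta> = min \<delta>0 1"
  have \<delta>: "0 < \<delta>" "\<delta> \<le> 1" using \<delta>0(1) by (simp_all add: \<delta>_def)
  have hit_G: "ennreal \<delta> \<le> (\<integral>\<^sup>+e. ennreal (exp (-w * (\<mu> x + \<sigma> x * e)) * indicator G (next_state \<mu> \<sigma> x e)) \<partial>D)"
    if "\<bar>x\<bar> \<le> R" "0 \<le> w" "w \<le> 1" for x w
    using order_trans[OF _ \<delta>0(2)[OF that]] by (simp add: \<delta>_def ennreal_leI)
  have K: "0 < Mm + Sg * E1 + 1" using Mm_nonneg Sg_pos E1_nonneg by (simp add: add_nonneg_pos)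
  obtain s \<theta> where s\<theta>: "0 < \<theta>" "\<theta> \<le> s" "\<theta> * R \<le> 1" "s \<le> 1" "s * Sg \<le> 1" "s * \<eta> \<le> 1"
      "8 * s\<^sup>2 * Sg\<^sup>2 * Q \<le> \<theta>" "24 * \<theta> * (Mm + Sg * E1 + 1) \<le> s * \<eta> * \<delta>"
    using small_exponents_exist[OF Sg_pos _ G(2) \<delta>(1) K Q_nonneg, of R] \<open>0 < R\<close> by auto
  have contract: "\<bar>x + \<mu> x\<bar> \<le> r * \<bar>x\<bar>" if "R \<le> \<bar>x\<bar>" for x
    using r_contr R(1) that by auto
  show ?thesis
  proof (rule that, intro drift_parameters.intro drift_parameters_axioms.intro)
    show "drift_model D \<mu> \<sigma>" by unfold_locales
  qed (fact Sg r contract R_large Mm G(1,2) G_R \<delta> hit_G s\<theta>)+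
qed

theorem geometric_drift:
  obtains s z h hm where "0 < s" "0 < z" "h \<in> borel_measurable borel" "0 < hm" "\<And>x. hm \<le> h x"
    "\<And>x. (\<integral>\<^sup>+e. ennreal (exp (-s * log_gain \<mu> \<sigma> x e) * h (next_state \<mu> \<sigma> x e)) \<partial>D)
       \<le> ennreal (exp (-z) * h x)"
proof -
  obtain Sg r R Mm \<eta> \<delta> s \<theta> G where P: "drift_parameters D \<mu> \<sigma> Sg r R Mm \<eta> \<delta> s \<theta> G"
    by (rule drift_parameters_exist)
  interpret P: drift_parameters D \<mu> \<sigma> Sg r R Mm \<eta> \<delta> s \<theta> G by (rule P)
  show ?thesis
  proof (rule that[of s "\<theta> / 2" P.lyap P.\<beta>])
    show "0 < s" "0 < \<theta> / 2" using P.theta by auto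
  qed (fact P.lyap_measurable P.beta(1) P.lyap_ge P.lyap_drift)+
qed

end

primrec state_path :: "(real \<Rightarrow> real) \<Rightarrow> (real \<Rightarrow> real) \<Rightarrow> real \<Rightarrow> (nat \<Rightarrow> real) \<Rightarrow> nat \<Rightarrow> real" where
  "state_path \<mu> \<sigma> x0 f 0 = x0"
| "state_path \<mu> \<sigma> x0 f (Suc t) = next_state \<mu> \<sigma> (state_path \<mu> \<sigma> x0 f t) (f (Suc t))"

primrec log_wealth :: "(real \<Rightarrow> real) \<Rightarrow> (real \<Rightarrow> real) \<Rightarrow> real \<Rightarrow> (nat \<Rightarrow> real) \<Rightarrow> nat \<Rightarrow> real" where
  "log_wealth \<mu> \<sigma> x0 f 0 = 0"
| "log_wealth \<mu> \<sigma> x0 f (Suc t) =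
     log_wealth \<mu> \<sigma> x0 f t + log_gain \<mu> \<sigma> (state_path \<mu> \<sigma> x0 f t) (f (Suc t))"

lemma Xproc_eq_state_path: "Xproc \<mu> \<sigma> \<epsilon> x0 t \<omega> = state_path \<mu> \<sigma> x0 (\<lambda>i. \<epsilon> i \<omega>) t"
  by (induction t) auto

text \<open>The wealth of \<pi>+ is v0 times the exponential of the accumulated log-gains: on each
  period \<pi>+ either stays in cash or holds the stock whose log-return is \<mu> x + \<sigma> x e.\<close>
lemma wealth_pi_plus:
  "wealth \<mu> \<sigma> \<epsilon> x0 (pi_plus \<mu> \<sigma> \<epsilon> x0) v0 t \<omega> = v0 * exp (log_wealth \<mu> \<sigma> x0 (\<lambda>i. \<epsilon> i \<omega>) t)"
proof (induction t)
  case (Suc t)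
  let ?x = "state_path \<mu> \<sigma> x0 (\<lambda>i. \<epsilon> i \<omega>) t" and ?r = "\<mu> (state_path \<mu> \<sigma> x0 (\<lambda>i. \<epsilon> i \<omega>) t)
    + \<sigma> (state_path \<mu> \<sigma> x0 (\<lambda>i. \<epsilon> i \<omega>) t) * \<epsilon> (Suc t) \<omega>"
  have ratio: "Sproc \<mu> \<sigma> \<epsilon> x0 (Suc t) \<omega> / Sproc \<mu> \<sigma> \<epsilon> x0 t \<omega> = exp ?r"
    by (simp add: Sproc_def Xproc_eq_state_path exp_add exp_diff[symmetric])
  have gain: "(1 - invested \<mu> ?x) + invested \<mu> ?x * Sproc \<mu> \<sigma> \<epsilon> x0 (Suc t) \<omega> / Sproc \<mu> \<sigma> \<epsilon> x0 t \<omega>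
      = exp (log_gain \<mu> \<sigma> ?x (\<epsilon> (Suc t) \<omega>))"
    using ratio by (simp add: indicator_def)
  have "pi_plus \<mu> \<sigma> \<epsilon> x0 (Suc t) \<omega> = invested \<mu> ?x"
    by (simp add: pi_plus_def Xproc_eq_state_path)
  hence "wealth \<mu> \<sigma> \<epsilon> x0 (pi_plus \<mu> \<sigma> \<epsilon> x0) v0 (Suc t) \<omega>
      = wealth \<mu> \<sigma> \<epsilon> x0 (pi_plus \<mu> \<sigma> \<epsilon> x0) v0 t \<omega> * exp (log_gain \<mu> \<sigma> ?x (\<epsilon> (Suc t) \<omega>))"
    by (simp only: wealth.simps gain)
  with Suc.IH show ?case by (simp add: exp_add)
qed simp

lemma path_cong:
  assumes "\<And>i. 1 \<le> i \<Longrightarrow> i \<le> t \<Longrightarrow> f i = g i"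
  shows "state_path \<mu> \<sigma> x0 f t = state_path \<mu> \<sigma> x0 g t \<and> log_wealth \<mu> \<sigma> x0 f t = log_wealth \<mu> \<sigma> x0 g t"
  using assms by (induction t) auto

lemma path_measurable_PiM:
  assumes [measurable]: "\<mu> \<in> borel_measurable borel" "\<sigma> \<in> borel_measurable borel"
  shows "k \<le> t \<Longrightarrow> (\<lambda>f. state_path \<mu> \<sigma> x0 f k) \<in> borel_measurable (PiM {1..t} (\<lambda>_. borel)) \<and>
           (\<lambda>f. log_wealth \<mu> \<sigma> x0 f k) \<in> borel_measurable (PiM {1..t} (\<lambda>_. borel))"
proof (induction k)
  case (Suc k)
  hence [measurable]: "(\<lambda>f. state_path \<mu> \<sigma> x0 f k) \<in> borel_measurable (PiM {1..t} (\<lambda>_. borel))"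
    "(\<lambda>f. log_wealth \<mu> \<sigma> x0 f k) \<in> borel_measurable (PiM {1..t} (\<lambda>_. borel))"
    "(\<lambda>f. f (Suc k)) \<in> borel_measurable (PiM {1..t} (\<lambda>_. borel))"
    by (auto intro: measurable_component_singleton)
  show ?case by (simp only: state_path.simps log_wealth.simps) (intro conjI; measurable)
qed simp

lemma path_measurable:
  assumes "\<And>t. t \<ge> 1 \<Longrightarrow> \<epsilon> t \<in> borel_measurable M"
    and [measurable]: "\<mu> \<in> borel_measurable borel" "\<sigma> \<in> borel_measurable borel"
  shows "(\<lambda>\<omega>. state_path \<mu> \<sigma> x0 (\<lambda>i. \<epsilon> i \<omega>) k) \<in> borel_measurable M \<and>
         (\<lambda>\<omega>. log_wealth \<mu> \<sigma> x0 (\<lambda>i. \<epsilon> i \<omega>) k) \<in> borel_measurable M"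
proof (induction k)
  case (Suc k)
  hence [measurable]: "(\<lambda>\<omega>. state_path \<mu> \<sigma> x0 (\<lambda>i. \<epsilon> i \<omega>) k) \<in> borel_measurable M"
    "(\<lambda>\<omega>. log_wealth \<mu> \<sigma> x0 (\<lambda>i. \<epsilon> i \<omega>) k) \<in> borel_measurable M"
    "\<epsilon> (Suc k) \<in> borel_measurable M" using assms(1) by auto
  show ?case by (simp only: state_path.simps log_wealth.simps) (intro conjI; measurable)
qed simp

lemma wealth_pi_plus_measurable:
  assumes "\<And>t. t \<ge> 1 \<Longrightarrow> \<epsilon> t \<in> borel_measurable M"
    and "\<mu> \<in> borel_measurable borel" "\<sigma> \<in> borel_measurable borel"
  shows "wealth \<mu> \<sigma> \<epsilon> x0 (pi_plus \<mu> \<sigma> \<epsilon> x0) v0 t \<in> borel_measurable M"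
proof -
  have [measurable]: "(\<lambda>\<omega>. log_wealth \<mu> \<sigma> x0 (\<lambda>i. \<epsilon> i \<omega>) t) \<in> borel_measurable M"
    using path_measurable[of \<epsilon> M \<mu> \<sigma> x0 t] assms by simp
  have "wealth \<mu> \<sigma> \<epsilon> x0 (pi_plus \<mu> \<sigma> \<epsilon> x0) v0 t = (\<lambda>\<omega>. v0 * exp (log_wealth \<mu> \<sigma> x0 (\<lambda>i. \<epsilon> i \<omega>) t))"
    by (simp add: wealth_pi_plus fun_eq_iff)
  thus ?thesis by simp
qed

lemma (in prob_space) nn_integral_indep_var:
  assumes ind: "indep_var S X T Y" and F [measurable]: "(\<lambda>(x, y). F x y) \<in> borel_measurable (S \<Otimes>\<^sub>M T)"
  shows "(\<integral>\<^sup>+\<omega>. F (X \<omega>) (Y \<omega>) \<partial>M) = (\<integral>\<^sup>+\<omega>. (\<integral>\<^sup>+y. F (X \<omega>) y \<partial>distr M T Y) \<partial>M)"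
proof -
  have [measurable]: "X \<in> measurable M S" "Y \<in> measurable M T"
    using indep_var_rv1[OF ind] indep_var_rv2[OF ind] by auto
  interpret Y: prob_space "distr M T Y" by (rule prob_space_distr) simp
  have sets_eq: "sets (distr M S X \<Otimes>\<^sub>M distr M T Y) = sets (S \<Otimes>\<^sub>M T)"
    by (intro sets_pair_measure_cong) simp_all
  have "(\<integral>\<^sup>+\<omega>. F (X \<omega>) (Y \<omega>) \<partial>M) = (\<integral>\<^sup>+z. (\<lambda>(x, y). F x y) z \<partial>distr M (S \<Otimes>\<^sub>M T) (\<lambda>\<omega>. (X \<omega>, Y \<omega>)))"
    by (subst nn_integral_distr) auto
  also have "\<dots> = (\<integral>\<^sup>+z. (\<lambda>(x, y). F x y) z \<partial>(distr M S X \<Otimes>\<^sub>M distr M T Y))"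
    using ind by (simp add: indep_var_distribution_eq)
  also have "\<dots> = (\<integral>\<^sup>+x. (\<integral>\<^sup>+y. F x y \<partial>distr M T Y) \<partial>distr M S X)"
    using measurable_cong_sets[OF sets_eq refl] by (subst Y.nn_integral_fst[symmetric]) auto
  also have "\<dots> = (\<integral>\<^sup>+\<omega>. (\<integral>\<^sup>+y. F (X \<omega>) y \<partial>distr M T Y) \<partial>M)"
  proof (rule nn_integral_distr)
    have "(\<lambda>x. \<integral>\<^sup>+y. F x y \<partial>distr M T Y) \<in> borel_measurable S"
      using measurable_cong_sets[OF refl sets_distr[symmetric]] 
      by (intro Y.borel_measurable_nn_integral) (simp add: measurable_cong_sets[OF refl sets_pair_measure_cong[OF refl sets_distr]])
    thus "(\<lambda>x. \<integral>\<^sup>+y. F x y \<partial>distr M T Y) \<in> borel_measurable (distr M S X)" by simp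
  qed simp
  finally show ?thesis .
qed

lemma (in prob_space) integrate_next_shock:
  fixes \<epsilon> :: "nat \<Rightarrow> 'a \<Rightarrow> real"
  assumes eps_meas: "\<And>t. t \<ge> 1 \<Longrightarrow> \<epsilon> t \<in> borel_measurable M"
    and eps_indep: "indep_vars (\<lambda>_. borel) \<epsilon> {1..}"
    and eps_law: "distr M borel (\<epsilon> (Suc t)) = D"
    and F: "(\<lambda>(p, e). F p e) \<in> borel_measurable (PiM {1..t} (\<lambda>_. borel) \<Otimes>\<^sub>M borel)"
  shows "(\<integral>\<^sup>+\<omega>. F (restrict (\<lambda>i. \<epsilon> i \<omega>) {1..t}) (\<epsilon> (Suc t) \<omega>) \<partial>M)
    = (\<integral>\<^sup>+\<omega>. (\<integral>\<^sup>+e. F (restrict (\<lambda>i. \<epsilon> i \<omega>) {1..t}) e \<partial>D) \<partial>M)"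
proof -
  let ?S = "PiM {1..t} (\<lambda>_. borel) :: (nat \<Rightarrow> real) measure"
  let ?T = "PiM {Suc t} (\<lambda>_. borel) :: (nat \<Rightarrow> real) measure"
  define past where "past \<omega> = restrict (\<lambda>i. \<epsilon> i \<omega>) {1..t}" for \<omega>
  define now where "now \<omega> = restrict (\<lambda>i. \<epsilon> i \<omega>) {Suc t}" for \<omega>
  have ind: "indep_var ?S past ?T now"
    unfolding past_def now_def by (rule indep_var_restrict[OF eps_indep]) auto
  have past_meas [measurable]: "past \<in> measurable M ?S"
    and [measurable]: "now \<in> measurable M ?T" "\<epsilon> (Suc t) \<in> borel_measurable M"
    using indep_var_rv1[OF ind] indep_var_rv2[OF ind] eps_meas[of "Suc t"] by auto
  have F_now: "(\<lambda>(p, q). F p (q (Suc t))) \<in> borel_measurable (?S \<Otimes>\<^sub>M ?T)"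
    using measurable_compose[OF _ F, of "\<lambda>(p, q). (p, q (Suc t))"] by (simp add: split_beta')
  have law: "(\<integral>\<^sup>+q. F p (q (Suc t)) \<partial>distr M ?T now) = (\<integral>\<^sup>+e. F p e \<partial>D)" if "p \<in> space ?S" for p
  proof -
    have [measurable]: "F p \<in> borel_measurable borel" using measurable_Pair2[OF F that] by simp
    have "(\<integral>\<^sup>+q. F p (q (Suc t)) \<partial>distr M ?T now) = (\<integral>\<^sup>+\<omega>. F p (\<epsilon> (Suc t) \<omega>) \<partial>M)"
      by (subst nn_integral_distr) (auto simp: now_def)
    also have "\<dots> = (\<integral>\<^sup>+e. F p e \<partial>distr M borel (\<epsilon> (Suc t)))" by (subst nn_integral_distr) auto
    finally show ?thesis using eps_law by simp
  qed
  have "(\<integral>\<^sup>+\<omega>. F (past \<omega>) (\<epsilon> (Suc t) \<omega>) \<partial>M) = (\<integral>\<^sup>+\<omega>. F (past \<omega>) (now \<omega> (Suc t)) \<partial>M)"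
    by (simp add: now_def)
  also have "\<dots> = (\<integral>\<^sup>+\<omega>. (\<integral>\<^sup>+q. F (past \<omega>) (q (Suc t)) \<partial>distr M ?T now) \<partial>M)"
    using nn_integral_indep_var[OF ind, of "\<lambda>p q. F p (q (Suc t))", OF F_now] by simp
  also have "\<dots> = (\<integral>\<^sup>+\<omega>. (\<integral>\<^sup>+e. F (past \<omega>) e \<partial>D) \<partial>M)"
    using measurable_space[OF past_meas] by (intro nn_integral_cong law) auto
  finally show ?thesis by (simp add: past_def)
qed

lemma discounted_step:
  "exp (-s * log_wealth \<mu> \<sigma> x0 f (Suc t)) * h (state_path \<mu> \<sigma> x0 f (Suc t))
   = exp (-s * log_wealth \<mu> \<sigma> x0 f t) * (exp (-s * log_gain \<mu> \<sigma> (state_path \<mu> \<sigma> x0 f t) (f (Suc t)))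
       * h (next_state \<mu> \<sigma> (state_path \<mu> \<sigma> x0 f t) (f (Suc t))))"
  by (simp add: algebra_simps flip: exp_add)

text \<open>Iterating the drift condition along the path: by independence of the shocks, the
  discounted Lyapunov function E[exp(-s log V_t) h(X_t)] decays like c^t.\<close>
lemma discounted_lyapunov_decay:
  fixes M :: "'a measure" and \<epsilon> :: "nat \<Rightarrow> 'a \<Rightarrow> real" and D :: "real measure"
  assumes P: "prob_space M"
    and eps_meas: "\<And>t. t \<ge> 1 \<Longrightarrow> \<epsilon> t \<in> borel_measurable M"
    and eps_indep: "prob_space.indep_vars M (\<lambda>_. borel) \<epsilon> {1..}"
    and eps_law: "\<And>t. t \<ge> 1 \<Longrightarrow> distr M borel (\<epsilon> t) = D"
    and mu_meas [measurable]: "\<mu> \<in> borel_measurable borel"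
    and sigma_meas [measurable]: "\<sigma> \<in> borel_measurable borel"
    and [measurable]: "h \<in> borel_measurable borel" and h_nonneg: "\<And>x. 0 \<le> h x" and c: "0 \<le> c"
    and drift: "\<And>x. (\<integral>\<^sup>+e. ennreal (exp (-s * log_gain \<mu> \<sigma> x e) * h (next_state \<mu> \<sigma> x e)) \<partial>D)
                 \<le> ennreal (c * h x)"
  shows "(\<integral>\<^sup>+\<omega>. ennreal (exp (-s * log_wealth \<mu> \<sigma> x0 (\<lambda>i. \<epsilon> i \<omega>) t) * h (state_path \<mu> \<sigma> x0 (\<lambda>i. \<epsilon> i \<omega>) t)) \<partial>M)
     \<le> ennreal (c ^ t * h x0)"
proof (induction t)
  case 0
  show ?case by (simp add: prob_space.emeasure_space_1[OF P])
next
  case (Suc t)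
  interpret prob_space M by (rule P)
  define F where "F p e = ennreal (exp (-s * log_wealth \<mu> \<sigma> x0 p t) *
      (exp (-s * log_gain \<mu> \<sigma> (state_path \<mu> \<sigma> x0 p t) e) * h (next_state \<mu> \<sigma> (state_path \<mu> \<sigma> x0 p t) e)))"
    for p e
  have [measurable]: "(\<lambda>p. state_path \<mu> \<sigma> x0 p t) \<in> borel_measurable (PiM {1..t} (\<lambda>_. borel))"
    "(\<lambda>p. log_wealth \<mu> \<sigma> x0 p t) \<in> borel_measurable (PiM {1..t} (\<lambda>_. borel))"
    "(\<lambda>\<omega>. state_path \<mu> \<sigma> x0 (\<lambda>i. \<epsilon> i \<omega>) t) \<in> borel_measurable M"
    "(\<lambda>\<omega>. log_wealth \<mu> \<sigma> x0 (\<lambda>i. \<epsilon> i \<omega>) t) \<in> borel_measurable M"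
    using path_measurable_PiM[of \<mu> \<sigma> t t x0] path_measurable[of \<epsilon> M \<mu> \<sigma> x0 t, OF eps_meas] by auto
  have F_meas: "(\<lambda>(p, e). F p e) \<in> borel_measurable (PiM {1..t} (\<lambda>_. borel) \<Otimes>\<^sub>M borel)"
    unfolding F_def by measurable
  have past: "state_path \<mu> \<sigma> x0 (restrict (\<lambda>i. \<epsilon> i \<omega>) {1..t}) t = state_path \<mu> \<sigma> x0 (\<lambda>i. \<epsilon> i \<omega>) t \<and>
      log_wealth \<mu> \<sigma> x0 (restrict (\<lambda>i. \<epsilon> i \<omega>) {1..t}) t = log_wealth \<mu> \<sigma> x0 (\<lambda>i. \<epsilon> i \<omega>) t" for \<omega>
    by (rule path_cong) auto
  have "(\<integral>\<^sup>+\<omega>. ennreal (exp (-s * log_wealth \<mu> \<sigma> x0 (\<lambda>i. \<epsilon> i \<omega>) (Suc t))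
        * h (state_path \<mu> \<sigma> x0 (\<lambda>i. \<epsilon> i \<omega>) (Suc t))) \<partial>M)
      = (\<integral>\<^sup>+\<omega>. F (restrict (\<lambda>i. \<epsilon> i \<omega>) {1..t}) (\<epsilon> (Suc t) \<omega>) \<partial>M)"
    by (simp only: F_def past discounted_step)
  also have "\<dots> = (\<integral>\<^sup>+\<omega>. (\<integral>\<^sup>+e. F (restrict (\<lambda>i. \<epsilon> i \<omega>) {1..t}) e \<partial>D) \<partial>M)"
    by (intro integrate_next_shock[OF eps_meas eps_indep _ F_meas] eps_law) auto
  also have "\<dots> \<le> (\<integral>\<^sup>+\<omega>. ennreal c * ennreal (exp (-s * log_wealth \<mu> \<sigma> x0 (\<lambda>i. \<epsilon> i \<omega>) t)
        * h (state_path \<mu> \<sigma> x0 (\<lambda>i. \<epsilon> i \<omega>) t)) \<partial>M)"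
  proof (intro nn_integral_mono)
    fix \<omega>
    let ?L = "log_wealth \<mu> \<sigma> x0 (\<lambda>i. \<epsilon> i \<omega>) t" and ?X = "state_path \<mu> \<sigma> x0 (\<lambda>i. \<epsilon> i \<omega>) t"
    have "F (restrict (\<lambda>i. \<epsilon> i \<omega>) {1..t}) e = ennreal (exp (-s * ?L)) *
        ennreal (exp (-s * log_gain \<mu> \<sigma> ?X e) * h (next_state \<mu> \<sigma> ?X e))" for e
      using h_nonneg[of "next_state \<mu> \<sigma> ?X e"] by (simp only: F_def past) (simp add: ennreal_mult)
    hence "(\<integral>\<^sup>+e. F (restrict (\<lambda>i. \<epsilon> i \<omega>) {1..t}) e \<partial>D) = ennreal (exp (-s * ?L)) *
        (\<integral>\<^sup>+e. ennreal (exp (-s * log_gain \<mu> \<sigma> ?X e) * h (next_state \<mu> \<sigma> ?X e)) \<partial>D)"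
      using eps_law[of 1, symmetric] by (simp add: nn_integral_cmult)
    also have "\<dots> \<le> ennreal (exp (-s * ?L)) * ennreal (c * h ?X)" by (intro mult_left_mono drift) simp
    also have "\<dots> = ennreal c * ennreal (exp (-s * ?L) * h ?X)"
      using c h_nonneg by (simp add: ennreal_mult[symmetric] mult_ac)
    finally show "(\<integral>\<^sup>+e. F (restrict (\<lambda>i. \<epsilon> i \<omega>) {1..t}) e \<partial>D) \<le> ennreal c * ennreal (exp (-s * ?L) * h ?X)" .
  qed
  also have "\<dots> = ennreal c * (\<integral>\<^sup>+\<omega>. ennreal (exp (-s * log_wealth \<mu> \<sigma> x0 (\<lambda>i. \<epsilon> i \<omega>) t)
        * h (state_path \<mu> \<sigma> x0 (\<lambda>i. \<epsilon> i \<omega>) t)) \<partial>M)"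
    by (rule nn_integral_cmult) measurable
  also have "\<dots> \<le> ennreal c * ennreal (c ^ t * h x0)" by (intro mult_left_mono Suc.IH) simp
  also have "\<dots> = ennreal (c ^ Suc t * h x0)" using c h_nonneg by (simp add: ennreal_mult[symmetric])
  finally show ?case .
qed

lemma contraction_of_Limsup:
  fixes \<mu> :: "real \<Rightarrow> real"
  assumes "Limsup at_infinity (\<lambda>x. ereal (\<bar>x + \<mu> x\<bar> / \<bar>x\<bar>)) < 1"
  shows "\<exists>r<1. \<exists>R0. \<forall>x. R0 \<le> \<bar>x\<bar> \<longrightarrow> \<bar>x + \<mu> x\<bar> \<le> r * \<bar>x\<bar>"
proof -
  obtain r where r: "Limsup at_infinity (\<lambda>x. ereal (\<bar>x + \<mu> x\<bar> / \<bar>x\<bar>)) < ereal r" "ereal r < 1"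
    using ereal_dense2[OF assms] by blast
  have "eventually (\<lambda>x. ereal (\<bar>x + \<mu> x\<bar> / \<bar>x\<bar>) < ereal r) at_infinity"
    by (rule Limsup_lessD[OF r(1)])
  then obtain b where b: "\<And>x::real. b \<le> norm x \<Longrightarrow> \<bar>x + \<mu> x\<bar> / \<bar>x\<bar> < r"
    by (auto simp: eventually_at_infinity)
  have "\<bar>x + \<mu> x\<bar> \<le> r * \<bar>x\<bar>" if "max b 1 \<le> \<bar>x\<bar>" for x
    using b[of x] that by (auto simp: divide_less_eq split: if_splits)
  moreover have "r < 1" using r(2) by simp
  ultimately show ?thesis by blast
qed

lemma gaussian_moment_integrable:
  fixes X :: "'a \<Rightarrow> real"
  assumes "prob_space M" and [measurable]: "X \<in> borel_measurable M"
    and k: "0 < \<kappa>" "integrable M (\<lambda>\<omega>. exp (\<kappa> * (X \<omega>)\<^sup>2))"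
  shows "integrable M (\<lambda>\<omega>. (X \<omega>)\<^sup>2 * exp (2 * \<bar>X \<omega>\<bar>))" and "integrable M X"
proof -
  interpret prob_space M by fact
  show Q: "integrable M (\<lambda>\<omega>. (X \<omega>)\<^sup>2 * exp (2 * \<bar>X \<omega>\<bar>))"
  proof (rule Bochner_Integration.integrable_bound)
    show "integrable M (\<lambda>\<omega>. (2/\<kappa>) * exp (2/\<kappa>) * exp (\<kappa> * (X \<omega>)\<^sup>2))"
      using k(2) by (rule Bochner_Integration.integrable_mult_right)
    show "AE \<omega> in M. norm ((X \<omega>)\<^sup>2 * exp (2 * \<bar>X \<omega>\<bar>)) \<le> norm ((2/\<kappa>) * exp (2/\<kappa>) * exp (\<kappa> * (X \<omega>)\<^sup>2))"
      using sq_exp_abs_le_gaussian[OF k(1)] k(1) by (intro AE_I2) simp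
  qed simp
  show "integrable M X"
  proof (rule Bochner_Integration.integrable_bound)
    show "integrable M (\<lambda>\<omega>. (X \<omega>)\<^sup>2 * exp (2 * \<bar>X \<omega>\<bar>) + 1)"
      using Q by (intro Bochner_Integration.integrable_add) auto
    have "\<bar>e\<bar> \<le> e\<^sup>2 * exp (2 * \<bar>e\<bar>) + 1" for e :: real
    proof (cases "\<bar>e\<bar> \<le> 1")
      case False
      hence "\<bar>e\<bar> * 1 \<le> \<bar>e\<bar> * \<bar>e\<bar>" by (intro mult_left_mono) auto
      hence "\<bar>e\<bar> \<le> e\<^sup>2" by (simp add: power2_eq_square)
      also have "\<dots> \<le> e\<^sup>2 * exp (2 * \<bar>e\<bar>)" using mult_left_mono[of 1 "exp (2 * \<bar>e\<bar>)" "e\<^sup>2"] by simp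
      finally show ?thesis by simp
    qed (simp add: add_increasing)
    thus "AE \<omega> in M. norm (X \<omega>) \<le> norm ((X \<omega>)\<^sup>2 * exp (2 * \<bar>X \<omega>\<bar>) + 1)"
      by (intro AE_I2) (simp add: add_nonneg_nonneg)
  qed simp
qed

lemma density_lower_bound:
  fixes X :: "'a \<Rightarrow> real" and \<gamma> :: "real \<Rightarrow> real"
  assumes dens: "distributed M lborel X (\<lambda>x. ennreal (\<gamma> x))"
    and bounds: "\<And>K. compact K \<Longrightarrow> \<exists>a b. 0 < a \<and> (\<forall>x\<in>K. a \<le> \<gamma> x \<and> \<gamma> x \<le> b)"
  shows "\<exists>a>0. \<forall>f\<in>borel_measurable borel.
    ennreal a * (\<integral>\<^sup>+e. f e * indicator {-E0..E0} e \<partial>lborel) \<le> (\<integral>\<^sup>+e. f e \<partial>distr M borel X)"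
proof -
  obtain a where a: "0 < a" "\<And>x. x \<in> {-E0..E0} \<Longrightarrow> a \<le> \<gamma> x"
    using bounds[OF compact_Icc] by blast
  have law: "distr M borel X = density lborel (\<lambda>x. ennreal (\<gamma> x))"
    using distributed_distr_eq_density[OF dens] distributed_measurable[OF dens]
    by (simp add: distr_cong[OF refl sets_lborel])
  have [measurable]: "(\<lambda>x. ennreal (\<gamma> x)) \<in> borel_measurable borel"
    using distributed_borel_measurable[OF dens] by simp
  have "ennreal a * (\<integral>\<^sup>+e. f e * indicator {-E0..E0} e \<partial>lborel) \<le> (\<integral>\<^sup>+e. f e \<partial>distr M borel X)"
    if [measurable]: "f \<in> borel_measurable borel" for f
  proof -
    have "ennreal a * (\<integral>\<^sup>+e. f e * indicator {-E0..E0} e \<partial>lborel)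
        = (\<integral>\<^sup>+e. ennreal a * (f e * indicator {-E0..E0} e) \<partial>lborel)"
      by (rule nn_integral_cmult[symmetric]) measurable
    also have "\<dots> \<le> (\<integral>\<^sup>+e. ennreal (\<gamma> e) * f e \<partial>lborel)"
      using a by (intro nn_integral_mono) (auto simp: indicator_def intro!: mult_right_mono ennreal_leI)
    also have "\<dots> = (\<integral>\<^sup>+e. f e \<partial>distr M borel X)"
      unfolding law by (rule nn_integral_density[symmetric]) measurable
    finally show ?thesis .
  qed
  with a(1) show ?thesis by blast
qed

lemma drift_model_of_assumptions:
  fixes M :: "'a measure" and \<epsilon> :: "nat \<Rightarrow> 'a \<Rightarrow> real" and \<mu> \<sigma> \<gamma> :: "real \<Rightarrow> real"
  assumes prob: "prob_space M" and eps1_meas [measurable]: "\<epsilon> 1 \<in> borel_measurable M"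
    and A1_density: "distributed M lborel (\<epsilon> 1) (\<lambda>x. ennreal (\<gamma> x))"
    and A1_gamma_bounds: "\<And>K. compact K \<Longrightarrow> \<exists>a b. 0 < a \<and> (\<forall>x\<in>K. a \<le> \<gamma> x \<and> \<gamma> x \<le> b)"
    and mu_meas: "\<mu> \<in> borel_measurable borel" and sigma_meas: "\<sigma> \<in> borel_measurable borel"
    and A2_mu_locbdd: "\<And>K. compact K \<Longrightarrow> bounded (\<mu> ` K)"
    and A2_sigma_pos: "\<And>x. \<sigma> x > 0"
    and A2_sigma_away: "\<And>K. compact K \<Longrightarrow> \<exists>a>0. \<forall>x\<in>K. a \<le> \<sigma> x"
    and A2_sigma_bdd: "\<exists>C. \<forall>x. \<sigma> x \<le> C"
    and A3: "Limsup at_infinity (\<lambda>x::real. ereal (\<bar>x + \<mu> x\<bar> / \<bar>x\<bar>)) < 1"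
    and A4_exp: "\<exists>\<kappa>>0. integrable M (\<lambda>\<omega>. exp (\<kappa> * (\<epsilon> 1 \<omega>)\<^sup>2))"
    and A4_mean: "prob_space.expectation M (\<epsilon> 1) = 0"
    and RCplus: "emeasure lborel {x. \<mu> x > 0} > 0"
  shows "drift_model (distr M borel (\<epsilon> 1)) \<mu> \<sigma>"
proof -
  interpret prob_space M by (rule prob)
  obtain \<kappa> where \<kappa>: "0 < \<kappa>" "integrable M (\<lambda>\<omega>. exp (\<kappa> * (\<epsilon> 1 \<omega>)\<^sup>2))" using A4_exp by blast
  note moments = gaussian_moment_integrable[OF prob eps1_meas \<kappa>]
  show ?thesis
  proof (intro drift_model.intro noise_law.intro drift_model_axioms.intro)
    show "prob_space (distr M borel (\<epsilon> 1))" by (rule prob_space_distr) (rule eps1_meas)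
    show "integrable (distr M borel (\<epsilon> 1)) (\<lambda>e. e)"
      "integrable (distr M borel (\<epsilon> 1)) (\<lambda>e. e\<^sup>2 * exp (2 * \<bar>e\<bar>))"
      using moments by (simp_all add: integrable_distr_eq)
    show "integral\<^sup>L (distr M borel (\<epsilon> 1)) (\<lambda>e. e) = 0"
      using A4_mean by (subst integral_distr[OF eps1_meas]) auto
    show "\<exists>C. \<forall>x. \<bar>x\<bar> \<le> R \<longrightarrow> \<bar>\<mu> x\<bar> \<le> C" for R
      using A2_mu_locbdd[OF compact_Icc, of "-R" R] by (force simp: bounded_iff abs_le_iff)
    show "\<exists>a>0. \<forall>x. \<bar>x\<bar> \<le> R \<longrightarrow> a \<le> \<sigma> x" for R
      using A2_sigma_away[OF compact_Icc, of "-R" R] by (force simp: abs_le_iff)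
    show "\<exists>r<1. \<exists>R0. \<forall>x. R0 \<le> \<bar>x\<bar> \<longrightarrow> \<bar>x + \<mu> x\<bar> \<le> r * \<bar>x\<bar>"
      by (rule contraction_of_Limsup[OF A3])
    show "\<exists>a>0. \<forall>f\<in>borel_measurable borel. ennreal a * (\<integral>\<^sup>+e. f e * indicator {-E0..E0} e \<partial>lborel)
      \<le> (\<integral>\<^sup>+e. f e \<partial>distr M borel (\<epsilon> 1))" for E0
      by (rule density_lower_bound[OF A1_density A1_gamma_bounds])
  qed (use mu_meas sigma_meas A2_sigma_pos A2_sigma_bdd RCplus in auto)
qed

text \<open>A geometric decay of E[V_t^(-s)] for the wealth of \<pi>+, obtained from the decay of the
  discounted Lyapunov function and the lower bound h \<ge> hm.\<close>
lemma wealth_negative_moment_decay: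
  fixes M :: "'a measure" and \<epsilon> :: "nat \<Rightarrow> 'a \<Rightarrow> real" and D :: "real measure"
  assumes P: "prob_space M"
    and eps_meas: "\<And>t. t \<ge> 1 \<Longrightarrow> \<epsilon> t \<in> borel_measurable M"
    and eps_indep: "prob_space.indep_vars M (\<lambda>_. borel) \<epsilon> {1..}"
    and eps_law: "\<And>t. t \<ge> 1 \<Longrightarrow> distr M borel (\<epsilon> t) = D"
    and mu_meas [measurable]: "\<mu> \<in> borel_measurable borel"
    and sigma_meas [measurable]: "\<sigma> \<in> borel_measurable borel"
    and h_meas [measurable]: "h \<in> borel_measurable borel" and hm: "0 < hm" "\<And>x. hm \<le> h x"
    and drift: "\<And>x. (\<integral>\<^sup>+e. ennreal (exp (-s * log_gain \<mu> \<sigma> x e) * h (next_state \<mu> \<sigma> x e)) \<partial>D)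
                 \<le> ennreal (exp (-z) * h x)"
    and v0: "0 < v0"
  shows "(\<integral>\<^sup>+\<omega>. ennreal (wealth \<mu> \<sigma> \<epsilon> x0 (pi_plus \<mu> \<sigma> \<epsilon> x0) v0 t \<omega> powr (-s)) \<partial>M)
     \<le> ennreal (v0 powr (-s) * h x0 / hm * exp (-z * real t))"
proof -
  define K where "K = v0 powr (-s) / hm"
  have K: "0 < K" using v0 hm by (simp add: K_def)
  have h_nonneg: "0 \<le> h x" for x using hm(2)[of x] hm(1) by linarith
  have [measurable]: "(\<lambda>\<omega>. state_path \<mu> \<sigma> x0 (\<lambda>i. \<epsilon> i \<omega>) t) \<in> borel_measurable M"
    "(\<lambda>\<omega>. log_wealth \<mu> \<sigma> x0 (\<lambda>i. \<epsilon> i \<omega>) t) \<in> borel_measurable M"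
    using path_measurable[of \<epsilon> M \<mu> \<sigma> x0 t, OF eps_meas mu_meas sigma_meas] by auto
  have "(\<integral>\<^sup>+\<omega>. ennreal (wealth \<mu> \<sigma> \<epsilon> x0 (pi_plus \<mu> \<sigma> \<epsilon> x0) v0 t \<omega> powr (-s)) \<partial>M)
      \<le> (\<integral>\<^sup>+\<omega>. ennreal K * ennreal (exp (-s * log_wealth \<mu> \<sigma> x0 (\<lambda>i. \<epsilon> i \<omega>) t)
          * h (state_path \<mu> \<sigma> x0 (\<lambda>i. \<epsilon> i \<omega>) t)) \<partial>M)"
  proof (intro nn_integral_mono)
    fix \<omega>
    let ?L = "log_wealth \<mu> \<sigma> x0 (\<lambda>i. \<epsilon> i \<omega>) t" and ?X = "state_path \<mu> \<sigma> x0 (\<lambda>i. \<epsilon> i \<omega>) t"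
    have "wealth \<mu> \<sigma> \<epsilon> x0 (pi_plus \<mu> \<sigma> \<epsilon> x0) v0 t \<omega> powr (-s) = v0 powr (-s) * exp (-s * ?L)"
      by (simp add: wealth_pi_plus powr_mult exp_powr_real mult.commute)
    also have "\<dots> = K * (exp (-s * ?L) * hm)" using hm by (simp add: K_def)
    also have "\<dots> \<le> K * (exp (-s * ?L) * h ?X)" using K hm by (intro mult_left_mono) auto
    finally show "ennreal (wealth \<mu> \<sigma> \<epsilon> x0 (pi_plus \<mu> \<sigma> \<epsilon> x0) v0 t \<omega> powr (-s))
        \<le> ennreal K * ennreal (exp (-s * ?L) * h ?X)"
      using K h_nonneg by (simp add: ennreal_mult[symmetric] ennreal_leI)
  qed
  also have "\<dots> = ennreal K * (\<integral>\<^sup>+\<omega>. ennreal (exp (-s * log_wealth \<mu> \<sigma> x0 (\<lambda>i. \<epsilon> i \<omega>) t)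
          * h (state_path \<mu> \<sigma> x0 (\<lambda>i. \<epsilon> i \<omega>) t)) \<partial>M)"
    by (intro nn_integral_cmult) measurable
  also have "\<dots> \<le> ennreal K * ennreal (exp (-z) ^ t * h x0)"
    using discounted_lyapunov_decay[OF P eps_meas eps_indep eps_law mu_meas sigma_meas h_meas h_nonneg _ drift]
    by (intro mult_left_mono) auto
  also have "\<dots> = ennreal (v0 powr (-s) * h x0 / hm * exp (-z * real t))"
    using K h_nonneg by (simp add: K_def ennreal_mult[symmetric] exp_of_nat_mult[symmetric] mult_ac)
  finally show ?thesis .
qed

lemma (in prob_space) negative_moment_tail:
  assumes [measurable]: "V \<in> borel_measurable M" and V_pos: "\<And>\<omega>. 0 < V \<omega>" and s: "0 < s"
    and moment: "(\<integral>\<^sup>+\<omega>. ennreal (V \<omega> powr (-s)) \<partial>M) \<le> ennreal B" and B: "0 \<le> B"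
  shows "prob {\<omega> \<in> space M. V \<omega> < exp a} \<le> exp (s * a) * B"
proof -
  define Bad where "Bad = {\<omega> \<in> space M. V \<omega> < exp a}"
  have Bad_sets [measurable]: "Bad \<in> sets M" unfolding Bad_def by measurable
  have Bad_bound: "ennreal (exp (-s * a)) * indicator Bad \<omega> \<le> ennreal (V \<omega> powr (-s))" for \<omega>
  proof -
    have "exp (-s * a) = exp a powr (-s)" by (simp add: exp_powr_real mult.commute)
    also have "\<dots> \<le> V \<omega> powr (-s)" if "\<omega> \<in> Bad"
      using that s V_pos by (intro powr_mono2') (auto simp: Bad_def)
    finally show ?thesis by (auto simp: indicator_def intro: ennreal_leI)
  qed
  have "ennreal (exp (-s * a)) * emeasure M Bad = (\<integral>\<^sup>+\<omega>. ennreal (exp (-s * a)) * indicator Bad \<omega> \<partial>M)"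
    by (simp add: nn_integral_cmult_indicator)
  also have "\<dots> \<le> (\<integral>\<^sup>+\<omega>. ennreal (V \<omega> powr (-s)) \<partial>M)" by (intro nn_integral_mono Bad_bound)
  also have "\<dots> \<le> ennreal B" by (rule moment)
  finally have "exp (-s * a) * prob Bad \<le> B"
    using B by (simp add: emeasure_eq_measure ennreal_mult[symmetric])
  hence "exp (s * a) * (exp (-s * a) * prob Bad) \<le> exp (s * a) * B" by (intro mult_left_mono) auto
  thus ?thesis by (simp add: Bad_def mult.assoc[symmetric] flip: exp_add)
qed

lemma exponential_growth_of_moment_decay:
  fixes V :: "nat \<Rightarrow> 'a \<Rightarrow> real"
  assumes "prob_space M" and V_meas [measurable]: "\<And>t. V t \<in> borel_measurable M"
    and V_pos: "\<And>t \<omega>. 0 < V t \<omega>" and s: "0 < s" and z: "0 < z" and C: "0 < C"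
    and decay: "\<And>t. (\<integral>\<^sup>+\<omega>. ennreal (V t \<omega> powr (-s)) \<partial>M) \<le> ennreal (C * exp (-z * real t))"
  shows "\<exists>b>0. \<exists>c>0. \<exists>T::nat. \<forall>t\<ge>T.
    measure M {\<omega> \<in> space M. V t \<omega> \<ge> exp (b * real t)} \<ge> 1 - exp (-c * real t)"
proof -
  interpret prob_space M by fact
  define b where "b = z / (2 * s)"
  define T where "T = nat \<lceil>4 * \<bar>ln C\<bar> / z\<rceil>"
  have "measure M {\<omega> \<in> space M. V t \<omega> \<ge> exp (b * real t)} \<ge> 1 - exp (-(z / 4) * real t)"
    if t: "T \<le> t" for t
  proof -
    have "prob {\<omega> \<in> space M. V t \<omega> < exp (b * real t)} \<le> exp (s * (b * real t)) * (C * exp (-z * real t))"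
      using V_pos s decay C by (intro negative_moment_tail) auto
    also have "\<dots> = C * exp (-(z / 2) * real t)"
      using s by (simp add: b_def mult_ac flip: exp_add)
    also have "\<dots> \<le> exp ((z / 4) * real t) * exp (-(z / 2) * real t)"
    proof -
      have "4 * \<bar>ln C\<bar> / z \<le> real t" using t unfolding T_def by linarith
      hence "ln C \<le> (z / 4) * real t" using z by (simp add: field_simps)
      hence "C \<le> exp ((z / 4) * real t)" using C by (metis exp_le_cancel_iff exp_ln)
      thus ?thesis by (intro mult_right_mono) auto
    qed
    also have "\<dots> = exp (-(z / 4) * real t)" by (simp flip: exp_add)
    finally have "prob {\<omega> \<in> space M. V t \<omega> < exp (b * real t)} \<le> exp (-(z / 4) * real t)" .
    moreover have "{\<omega> \<in> space M. V t \<omega> \<ge> exp (b * real t)} = space M - {\<omega> \<in> space M. V t \<omega> < exp (b * real t)}"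
      by auto
    ultimately show ?thesis using prob_compl[of "{\<omega> \<in> space M. V t \<omega> < exp (b * real t)}"] by simp
  qed
  moreover have "0 < b" "0 < z / 4" using s z by (simp_all add: b_def)
  ultimately show ?thesis by blast
qed

theorem theoremt2p15:
  fixes M :: "'a measure" and \<epsilon> :: "nat \<Rightarrow> 'a \<Rightarrow> real"
    and \<mu> \<sigma> \<gamma> :: "real \<Rightarrow> real" and x0 v0 :: real
  assumes prob: "prob_space M"
    and eps_meas: "\<And>t. t \<ge> 1 \<Longrightarrow> \<epsilon> t \<in> borel_measurable M"
    and eps_indep: "prob_space.indep_vars M (\<lambda>_. borel) \<epsilon> {1..}"
    and eps_ident: "\<And>t. t \<ge> 1 \<Longrightarrow> distr M borel (\<epsilon> t) = distr M borel (\<epsilon> 1)"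
    (* (A1) *)
    and A1_density: "distributed M lborel (\<epsilon> 1) (\<lambda>x. ennreal (\<gamma> x))"
    and A1_gamma_meas: "\<gamma> \<in> borel_measurable borel"
    and A1_gamma_nonneg: "\<And>x. \<gamma> x \<ge> 0"
    and A1_gamma_bounds: "\<And>K. compact K \<Longrightarrow> \<exists>a b. 0 < a \<and> (\<forall>x\<in>K. a \<le> \<gamma> x \<and> \<gamma> x \<le> b)"
    (* (A2) *)
    and mu_meas: "\<mu> \<in> borel_measurable borel"
    and sigma_meas: "\<sigma> \<in> borel_measurable borel"
    and A2_mu_locbdd: "\<And>K. compact K \<Longrightarrow> bounded (\<mu> ` K)"
    and A2_sigma_pos: "\<And>x. \<sigma> x > 0"
    and A2_sigma_away: "\<And>K. compact K \<Longrightarrow> \<exists>a>0. \<forall>x\<in>K. a \<le> \<sigma> x"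
    and A2_sigma_bdd: "\<exists>C. \<forall>x. \<sigma> x \<le> C"
    (* (A3) *)
    and A3: "Limsup at_infinity (\<lambda>x::real. ereal (\<bar>x + \<mu> x\<bar> / \<bar>x\<bar>)) < 1"
    (* (A4) *)
    and A4_exp: "\<exists>\<kappa>>0. integrable M (\<lambda>\<omega>. exp (\<kappa> * (\<epsilon> 1 \<omega>)\<^sup>2))"
    and A4_mean: "prob_space.expectation M (\<epsilon> 1) = 0"
    (* (RC+) *)
    and RCplus: "emeasure lborel {x. \<mu> x > 0} > 0"
    and v0_pos: "v0 > 0"
  shows "\<exists>b>0. \<exists>c>0. \<exists>T::nat. \<forall>t\<ge>T.
           measure M {\<omega> \<in> space M. wealth \<mu> \<sigma> \<epsilon> x0 (pi_plus \<mu> \<sigma> \<epsilon> x0) v0 t \<omega> \<ge> exp (b * real t)}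
             \<ge> 1 - exp (- c * real t)"
proof -
  have eps1_meas: "\<epsilon> 1 \<in> borel_measurable M" by (rule eps_meas) simp
  interpret drift_model "distr M borel (\<epsilon> 1)" \<mu> \<sigma>
    by (rule drift_model_of_assumptions[where \<epsilon>=\<epsilon> and \<gamma>=\<gamma>, OF prob eps1_meas A1_density A1_gamma_bounds mu_meas
          sigma_meas A2_mu_locbdd A2_sigma_pos A2_sigma_away A2_sigma_bdd A3 A4_exp A4_mean RCplus])
  obtain s z h hm where s: "0 < s" and z: "0 < z" and h: "h \<in> borel_measurable borel"
    and hm: "0 < hm" "\<And>x. hm \<le> h x"
    and drift: "\<And>x. (\<integral>\<^sup>+e. ennreal (exp (-s * log_gain \<mu> \<sigma> x e) * h (next_state \<mu> \<sigma> x e)) \<partial>distr M borel (\<epsilon> 1))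
      \<le> ennreal (exp (-z) * h x)"
    using geometric_drift by blast
  have "0 < v0 powr (-s) * h x0 / hm" using v0_pos hm by (simp add: order.strict_trans2[OF hm])
  moreover have "0 < wealth \<mu> \<sigma> \<epsilon> x0 (pi_plus \<mu> \<sigma> \<epsilon> x0) v0 t \<omega>" for t \<omega>
    using v0_pos by (simp add: wealth_pi_plus)
  ultimately show ?thesis
    using wealth_negative_moment_decay[OF prob eps_meas eps_indep eps_ident mu_meas sigma_meas h hm drift v0_pos]
      wealth_pi_plus_measurable[OF eps_meas mu_meas sigma_meas]
    by (intro exponential_growth_of_moment_decay[OF prob _ _ s z]) auto
qed

end
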